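(* Let $\alpha\in(0,2)$ and let $(X_j)_{j\ge1}$ be i.i.d. real random variables with distribution function $F_0$ satisfying $\lim_{x\to+\infty}x^\alpha(1-F_0(x))=c_0^+<\infty$, $\lim_{x\to-\infty}|x|^\alpha F_0(x)=c_0^-<\infty$, with $c_0:=c_0^++c_0^->0$. If $\alpha=1$ assume moreover $c_0^+=c_0^-$ and $\lim_{R\to+\infty}\int_{(-R,R)}x\,dF_0(x)=\gamma_0\in(-\infty,+\infty)$; if $\alpha>1$ assume $\mathbb E[X_1]=0$. Let $[b_{jn}:j=1,\dots,n;\ n\ge1]$ be an array of non-negative real numbers, $S_n:=\sum_{j=1}^n b_{jn}X_j$ and $b(n):=\max_{1\le j\le n}b_{jn}$. If $b(n)\to0$, $\sum_{j=1}^n b_{jn}^\alpha\to1$ and $x_n\to+\infty$, then \[ \lim_{n\to+\infty}x_n^\alpha P\{|S_n|>x_n\}=c_0. \] *)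

theory Defs
  imports "HOL-Probability.Probability"
begin

end

theory Submission
  imports Defs
begin

text \<open>Single big jump. Truncate every summand \<open>b j n * X j\<close> at level \<open>T = \<delta> x\<close>. If \<open>|S n| > x\<close>,
  then either no summand exceeds \<open>T\<close> and the truncated sum exceeds \<open>x\<close> (Chebyshev), or two
  summands exceed \<open>T\<close>, or one exceeds \<open>(1 - \<epsilon>) x\<close>, or one exceeds \<open>T\<close> while the truncated
  remainder exceeds \<open>\<epsilon> x\<close>; conversely a single summand above \<open>(1 + \<epsilon>) x\<close> with all others small
  forces \<open>|S n| > x\<close>. Because \<open>max b \<rightarrow> 0\<close> and \<open>\<Sum> b^\<alpha> \<rightarrow> 1\<close>, the tail \<open>P(|X| > t) \<sim> c\<^sub>0 t^-\<alpha>\<close>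
  gives \<open>x^\<alpha> \<Sum> P(b j n |X j| > a x) \<rightarrow> c\<^sub>0 a^-\<alpha>\<close>. The truncated second moment grows like
  \<open>T^(2-\<alpha>)\<close> and, thanks to the centring hypotheses for \<open>\<alpha> \<ge> 1\<close>, the truncated mean like
  \<open>T^(1-\<alpha>)\<close>; after multiplication by \<open>x^\<alpha>\<close> the Chebyshev terms are \<open>O(\<delta>^(2-\<alpha>))\<close> and the
  two-jump terms vanish. Letting \<open>\<epsilon>, \<delta> \<rightarrow> 0\<close> gives the limit \<open>c\<^sub>0 = c0p + c0m\<close>.\<close>

section \<open>Regularly varying tails along a triangular array\<close>

lemma tail_term_approx:
  fixes G :: "real \<Rightarrow> real" and L a c x e t1 \<alpha> :: real
  assumes G: "\<And>t. t \<ge> t1 \<Longrightarrow> \<bar>t powr \<alpha> * G t - L\<bar> < e"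
    and x: "x > 0" "x \<ge> t1" and c: "0 < c" "c < a"
  shows "\<bar>x powr \<alpha> * G (a * x / c) - L * a powr (-\<alpha>) * c powr \<alpha>\<bar> \<le> e * a powr (-\<alpha>) * c powr \<alpha>"
proof -
  define t where "t = a * x / c"
  have "t \<ge> x" using x c by (simp add: t_def field_simps)
  hence tb: "\<bar>t powr \<alpha> * G t - L\<bar> < e" using x by (intro G) simp
  have "t > 0" using x c by (simp add: t_def)
  hence "x powr \<alpha> = a powr (-\<alpha>) * c powr \<alpha> * t powr \<alpha>"
    using x c by (simp add: t_def powr_divide powr_mult powr_minus divide_simps)
  hence "x powr \<alpha> * G t - L * a powr (-\<alpha>) * c powr \<alpha> = a powr (-\<alpha>) * c powr \<alpha> * (t powr \<alpha> * G t - L)"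
    by (simp add: algebra_simps)
  hence "\<bar>x powr \<alpha> * G t - L * a powr (-\<alpha>) * c powr \<alpha>\<bar> = a powr (-\<alpha>) * c powr \<alpha> * \<bar>t powr \<alpha> * G t - L\<bar>"
    by (simp add: abs_mult)
  also have "\<dots> \<le> a powr (-\<alpha>) * c powr \<alpha> * e" using tb by (intro mult_left_mono) auto
  finally show ?thesis by (simp add: t_def mult_ac)
qed

lemma tendsto_weighted_tail_sum:
  fixes G :: "real \<Rightarrow> real" and b :: "nat \<Rightarrow> nat \<Rightarrow> real" and xs :: "nat \<Rightarrow> real"
  assumes G: "((\<lambda>t. t powr \<alpha> * G t) \<longlongrightarrow> L) at_top"
    and a: "a > 0"
    and b_nonneg: "\<And>j n. 1 \<le> j \<Longrightarrow> j \<le> n \<Longrightarrow> b j n \<ge> 0"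
    and b_max: "(\<lambda>n. Max ((\<lambda>j. b j n) ` {1..n})) \<longlonglongrightarrow> 0"
    and b_sum: "(\<lambda>n. \<Sum>j=1..n. b j n powr \<alpha>) \<longlonglongrightarrow> 1"
    and xs_lim: "filterlim xs at_top sequentially"
  shows "(\<lambda>n. xs n powr \<alpha> * (\<Sum>j=1..n. if b j n > 0 then G (a * xs n / b j n) else 0))
          \<longlonglongrightarrow> L * a powr (-\<alpha>)"
proof -
  define s where "s n = (\<Sum>j=1..n. b j n powr \<alpha>)" for n
  define D where "D n = xs n powr \<alpha> * (\<Sum>j=1..n. if b j n > 0 then G (a * xs n / b j n) else 0)
       - L * a powr (-\<alpha>) * s n" for n
  have s_lim: "s \<longlonglongrightarrow> 1" using b_sum by (simp add: s_def[abs_def])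
  have "D \<longlonglongrightarrow> 0"
  proof (rule tendstoI)
    fix e :: real assume e: "e > 0"
    define e' where "e' = e / (4 * a powr (-\<alpha>))"
    have e': "e' > 0" using e a by (simp add: e'_def)
    obtain t1 where t1: "\<And>t. t \<ge> t1 \<Longrightarrow> \<bar>t powr \<alpha> * G t - L\<bar> < e'"
      using tendstoD[OF G e'] by (auto simp: eventually_at_top_linorder dist_real_def)
    have "eventually (\<lambda>n. xs n \<ge> max t1 1) sequentially"
      using xs_lim filterlim_at_top by blast
    moreover have "eventually (\<lambda>n. Max ((\<lambda>j. b j n) ` {1..n}) < a) sequentially"
      using b_max a by (intro order_tendstoD) auto
    moreover have "eventually (\<lambda>n. s n < 2) sequentially"
      using s_lim by (rule order_tendstoD) simp
    ultimately show "eventually (\<lambda>n. dist (D n) 0 < e) sequentially"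
    proof eventually_elim
      case (elim n)
      have bound: "\<bar>xs n powr \<alpha> * (if b j n > 0 then G (a * xs n / b j n) else 0)
             - L * a powr (-\<alpha>) * b j n powr \<alpha>\<bar> \<le> e' * a powr (-\<alpha>) * b j n powr \<alpha>"
        if j: "j \<in> {1..n}" for j
      proof (cases "b j n > 0")
        case True
        have "b j n \<le> Max ((\<lambda>j. b j n) ` {1..n})" using j by (intro Max_ge) auto
        thus ?thesis using tail_term_approx[OF t1, where x="xs n" and c="b j n" and a=a] True elim by auto
      next
        case False
        hence "b j n = 0" using b_nonneg[of j n] j by force
        thus ?thesis using e' by simp
      qed
      have "\<bar>D n\<bar> = \<bar>\<Sum>j=1..n. xs n powr \<alpha> * (if b j n > 0 then G (a * xs n / b j n) else 0)
             - L * a powr (-\<alpha>) * b j n powr \<alpha>\<bar>"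
        by (simp add: D_def s_def sum_subtractf sum_distrib_left)
      also have "\<dots> \<le> (\<Sum>j=1..n. e' * a powr (-\<alpha>) * b j n powr \<alpha>)"
        by (rule order_trans[OF sum_abs sum_mono]) (rule bound)
      also have "\<dots> = e' * a powr (-\<alpha>) * s n" by (simp add: s_def sum_distrib_left)
      also have "\<dots> \<le> e' * a powr (-\<alpha>) * 2"
        using elim e' by (intro mult_left_mono) auto
      also have "\<dots> < e" using e a by (simp add: e'_def)
      finally show ?case by (simp add: dist_real_def)
    qed
  qed
  hence "(\<lambda>n. D n + L * a powr (-\<alpha>) * s n) \<longlonglongrightarrow> 0 + L * a powr (-\<alpha>) * 1"
    by (intro tendsto_intros s_lim)
  thus ?thesis by (simp add: D_def s_def)
qed

section \<open>Dyadic decompositions and power identities\<close>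

lemma powr_dyadic_halving:
  fixes R p \<alpha> :: real
  assumes "R > 0"
  shows "(R/2^k) powr p * (R/2^(Suc k)) powr (-\<alpha>) = 2 powr \<alpha> * R powr (p-\<alpha>) * (2 powr (\<alpha>-p))^k"
proof (rule ln_inj_iff[THEN iffD1])
  show "ln ((R/2^k) powr p * (R/2^(Suc k)) powr (-\<alpha>)) = ln (2 powr \<alpha> * R powr (p-\<alpha>) * (2 powr (\<alpha>-p))^k)"
    using assms by (simp add: ln_mult ln_div ln_powr ln_realpow algebra_simps)
qed (use assms in simp_all)

lemma powr_dyadic_doubling:
  fixes R \<alpha> :: real
  assumes "R > 0"
  shows "R*2^(Suc k) * (R*2^k) powr (-\<alpha>) = 2 * R powr (1-\<alpha>) * (2 powr (1-\<alpha>))^k"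
proof (rule ln_inj_iff[THEN iffD1])
  show "ln (R*2^(Suc k) * (R*2^k) powr (-\<alpha>)) = ln (2 * R powr (1-\<alpha>) * (2 powr (1-\<alpha>))^k)"
    using assms by (simp add: ln_mult ln_div ln_powr ln_realpow algebra_simps)
qed (use assms in simp_all)

lemma geometric_sum_le:
  fixes q :: real
  assumes "0 < q" "q < 1"
  shows "(\<Sum>k<N. q^k) \<le> 1 / (1 - q)"
proof -
  have "(\<Sum>k<N. q^k) = (1 - q^N) / (1 - q)" using assms by (simp add: sum_gp_strict)
  also have "\<dots> \<le> 1 / (1 - q)" using assms by (intro divide_right_mono) auto
  finally show ?thesis .
qed

lemma exists_dyadic_bracket:
  fixes t0 R :: real
  assumes "t0 > 0" "t0 \<le> R"
  shows "\<exists>N. t0 * 2^N \<le> R \<and> R < t0 * 2^(Suc N)"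
proof -
  obtain n where "R / t0 < 2^n" using real_arch_pow[of 2 "R/t0"] by auto
  hence ex: "R < t0 * 2^(Suc n)" using assms by (simp add: field_simps)
  define N where "N = (LEAST n. R < t0 * 2^(Suc n))"
  have "R < t0 * 2^(Suc N)" unfolding N_def by (rule LeastI[of "\<lambda>n. R < t0 * 2^(Suc n)", OF ex])
  moreover have "t0 * 2^N \<le> R"
  proof (cases N)
    case (Suc m)
    thus ?thesis using not_less_Least[of m "\<lambda>n. R < t0 * 2^(Suc n)"] N_def by simp
  qed (use assms in simp)
  ultimately show ?thesis by blast
qed

lemma abs_powr_le_dyadic_sum:
  fixes y R t0 p :: real
  assumes t0: "t0 > 0" and p: "p > 0" and N: "t0 * 2^N \<le> R" "R < t0 * 2^(Suc N)" and y: "\<bar>y\<bar> \<le> R"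
  shows "\<bar>y\<bar> powr p \<le> (2*t0) powr p + (\<Sum>k<N. (R/2^k) powr p * (if \<bar>y\<bar> > R/2^(Suc k) then 1 else 0))"
proof (cases "\<bar>y\<bar> \<le> R/2^N")
  case True
  have "R/2^N < 2*t0" using N(2) by (simp add: field_simps)
  hence "\<bar>y\<bar> powr p \<le> (2*t0) powr p" using True p by (intro powr_mono2) auto
  moreover have "0 \<le> (\<Sum>k<N. (R/2^k) powr p * (if \<bar>y\<bar> > R/2^(Suc k) then 1 else 0))"
    by (intro sum_nonneg) auto
  ultimately show ?thesis by linarith
next
  case False
  have N0: "N > 0" using False y by (cases N) auto
  have ex: "\<bar>y\<bar> > R/2^(Suc (N-1))" using False N0 by simp
  define k where "k = (LEAST k. \<bar>y\<bar> > R/2^(Suc k))"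
  have k1: "\<bar>y\<bar> > R/2^(Suc k)" unfolding k_def by (rule LeastI[of "\<lambda>k. \<bar>y\<bar> > R/2^(Suc k)", OF ex])
  have "k \<le> N - 1" unfolding k_def by (rule Least_le[of "\<lambda>k. \<bar>y\<bar> > R/2^(Suc k)", OF ex])
  hence kN: "k < N" using N0 by simp
  have "\<bar>y\<bar> \<le> R/2^k"
  proof (cases k)
    case (Suc m)
    thus ?thesis using not_less_Least[of m "\<lambda>k. \<bar>y\<bar> > R/2^(Suc k)"] k_def by simp
  qed (use y in simp)
  hence "\<bar>y\<bar> powr p \<le> (R/2^k) powr p * (if \<bar>y\<bar> > R/2^(Suc k) then 1 else 0)"
    using k1 p by (simp add: powr_mono2)
  also have "\<dots> \<le> (\<Sum>k<N. (R/2^k) powr p * (if \<bar>y\<bar> > R/2^(Suc k) then 1 else 0))"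
    by (rule member_le_sum) (use kN in auto)
  finally show ?thesis by (smt (verit) powr_ge_zero)
qed

lemma abs_le_dyadic_sum:
  fixes y R :: real
  assumes R: "R > 0" and y: "R < \<bar>y\<bar>" "\<bar>y\<bar> \<le> R*2^N"
  shows "\<bar>y\<bar> \<le> (\<Sum>k<N. R*2^(Suc k) * (if \<bar>y\<bar> > R*2^k then 1 else 0))"
proof -
  have N0: "N > 0" using y by (cases N) auto
  have ex: "\<bar>y\<bar> \<le> R*2^(Suc (N-1))" using y N0 by simp
  define k where "k = (LEAST k. \<bar>y\<bar> \<le> R*2^(Suc k))"
  have k1: "\<bar>y\<bar> \<le> R*2^(Suc k)" unfolding k_def by (rule LeastI[of "\<lambda>k. \<bar>y\<bar> \<le> R*2^(Suc k)", OF ex])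
  have "k \<le> N - 1" unfolding k_def by (rule Least_le[of "\<lambda>k. \<bar>y\<bar> \<le> R*2^(Suc k)", OF ex])
  hence kN: "k < N" using N0 by simp
  have "\<bar>y\<bar> > R*2^k"
  proof (cases k)
    case (Suc m)
    thus ?thesis using not_less_Least[of m "\<lambda>k. \<bar>y\<bar> \<le> R*2^(Suc k)"] k_def by simp
  qed (use y in simp)
  hence "\<bar>y\<bar> \<le> R*2^(Suc k) * (if \<bar>y\<bar> > R*2^k then 1 else 0)" using k1 by simp
  also have "\<dots> \<le> (\<Sum>k<N. R*2^(Suc k) * (if \<bar>y\<bar> > R*2^k then 1 else 0))"
    by (rule member_le_sum) (use kN R in auto)
  finally show ?thesis .
qed

lemma powr_mult_div_powr:
  fixes c T p \<alpha> :: real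
  assumes "c > 0" "T > 0"
  shows "c powr p * (T / c) powr (p - \<alpha>) = T powr (p - \<alpha>) * c powr \<alpha>"
proof (rule ln_inj_iff[THEN iffD1])
  show "ln (c powr p * (T / c) powr (p - \<alpha>)) = ln (T powr (p - \<alpha>) * c powr \<alpha>)"
    using assms by (simp add: ln_mult ln_div ln_powr algebra_simps)
qed (use assms in simp_all)

lemma scaled_moment_bound_eq:
  fixes x \<delta> \<alpha> K1 K2 s :: real
  assumes x: "x > 0" and d: "\<delta> > 0"
  shows "x powr \<alpha> * (K2 * (\<delta>*x) powr (2-\<alpha>) * s + (K1 * (\<delta>*x) powr (1-\<alpha>) * s)\<^sup>2) / x\<^sup>2
     = K2 * \<delta> powr (2-\<alpha>) * s + K1\<^sup>2 * \<delta> powr (2-2*\<alpha>) * s\<^sup>2 * x powr (-\<alpha>)"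
proof -
  have sq: "x powr \<alpha> * (\<delta>*x) powr (2-\<alpha>) / x\<^sup>2 = \<delta> powr (2-\<alpha>)"
  proof (rule ln_inj_iff[THEN iffD1])
    show "ln (x powr \<alpha> * (\<delta>*x) powr (2-\<alpha>) / x\<^sup>2) = ln (\<delta> powr (2-\<alpha>))"
      using assms by (simp add: ln_mult ln_div ln_powr ln_realpow algebra_simps)
  qed (use assms in simp_all)
  have lin: "x powr \<alpha> * ((\<delta>*x) powr (1-\<alpha>))\<^sup>2 / x\<^sup>2 = \<delta> powr (2-2*\<alpha>) * x powr (-\<alpha>)"
  proof (rule ln_inj_iff[THEN iffD1])
    show "ln (x powr \<alpha> * ((\<delta>*x) powr (1-\<alpha>))\<^sup>2 / x\<^sup>2) = ln (\<delta> powr (2-2*\<alpha>) * x powr (-\<alpha>))"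
      using assms by (simp add: ln_mult ln_div ln_powr ln_realpow algebra_simps)
  qed (use assms in simp_all)
  have "x powr \<alpha> * (K2 * (\<delta>*x) powr (2-\<alpha>) * s + (K1 * (\<delta>*x) powr (1-\<alpha>) * s)\<^sup>2) / x\<^sup>2
     = K2 * s * (x powr \<alpha> * (\<delta>*x) powr (2-\<alpha>) / x\<^sup>2) + K1\<^sup>2 * s\<^sup>2 * (x powr \<alpha> * ((\<delta>*x) powr (1-\<alpha>))\<^sup>2 / x\<^sup>2)"
    by (simp add: power_mult_distrib add_divide_distrib distrib_left mult_ac)
  thus ?thesis by (simp only: sq lin) (simp add: mult_ac)
qed

lemma exists_eps_powr_close:
  fixes c \<alpha> \<eta> :: real
  assumes "\<eta> > 0"
  shows "\<exists>\<epsilon>. 0 < \<epsilon> \<and> \<epsilon> < 1 \<and> c * (1 - \<epsilon>) powr (-\<alpha>) < c + \<eta> \<and> c - \<eta> < c * (1 + \<epsilon>) powr (-\<alpha>)"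
proof -
  have "((\<lambda>e::real. c * (1 - e) powr (-\<alpha>)) \<longlongrightarrow> c * (1 - 0) powr (-\<alpha>)) (at_right 0)"
    and "((\<lambda>e::real. c * (1 + e) powr (-\<alpha>)) \<longlongrightarrow> c * (1 + 0) powr (-\<alpha>)) (at_right 0)"
    by (intro tendsto_intros; simp)+
  hence "eventually (\<lambda>e. c * (1 - e) powr (-\<alpha>) < c + \<eta> \<and> c - \<eta> < c * (1 + e) powr (-\<alpha>)
      \<and> e < 1 \<and> 0 < e) (at_right (0::real))"
    using assms by (intro eventually_conj order_tendstoD eventually_at_right_less
        order_tendstoD(2)[OF tendsto_ident_at]) auto
  thus ?thesis using eventually_happens'[OF trivial_limit_at_right_real] by blast
qed

lemma exists_delta_powr_small:
  fixes K \<beta> \<eta> :: real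
  assumes "\<eta> > 0" "\<beta> > 0"
  shows "\<exists>\<delta>. 0 < \<delta> \<and> \<delta> \<le> 1 \<and> K * \<delta> powr \<beta> < \<eta>"
proof -
  have "((\<lambda>d::real. K * d powr \<beta>) \<longlongrightarrow> K * 0) (at_right 0)"
    using assms(2) eventually_at_right_less[of "0::real"]
    by (intro tendsto_mult tendsto_const tendsto_zero_powrI[OF tendsto_ident_at tendsto_const])
      (auto elim: eventually_mono)
  hence "eventually (\<lambda>d. K * d powr \<beta> < \<eta> \<and> d < 1 \<and> 0 < d) (at_right (0::real))"
    using assms by (intro eventually_conj order_tendstoD(2) eventually_at_right_less
        order_tendstoD(2)[OF tendsto_ident_at]) auto
  thus ?thesis using eventually_happens'[OF trivial_limit_at_right_real] by force
qed

section \<open>Pointwise form of the single big jump decomposition\<close>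

definition truncated :: "real \<Rightarrow> real \<Rightarrow> real \<Rightarrow> real" where
  "truncated c T y = (if \<bar>c * y\<bar> \<le> T then c * y else 0)"

definition exceeds :: "real \<Rightarrow> real \<Rightarrow> real \<Rightarrow> real" where
  "exceeds c T y = (if T < \<bar>c * y\<bar> then 1 else 0)"

lemma truncated_measurable[measurable]: "truncated c T \<in> borel_measurable borel"
  unfolding truncated_def by measurable

lemma exceeds_measurable[measurable]: "exceeds c T \<in> borel_measurable borel"
  unfolding exceeds_def by measurable

lemma exceeds_nonneg: "0 \<le> exceeds c T y"
  by (simp add: exceeds_def)

lemma exceeds_le_1: "exceeds c T y \<le> 1"
  by (simp add: exceeds_def)

lemma abs_truncated_le: "T \<ge> 0 \<Longrightarrow> \<bar>truncated c T y\<bar> \<le> T"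
  by (simp add: truncated_def)

lemma sum_truncated_sq_le:
  assumes "T \<ge> 0"
  shows "(\<Sum>i\<in>A. truncated (b i) T (u i))\<^sup>2 \<le> (real (card A) * T)\<^sup>2"
proof -
  have "\<bar>\<Sum>i\<in>A. truncated (b i) T (u i)\<bar> \<le> (\<Sum>i\<in>A. T)"
    using assms by (intro order_trans[OF sum_abs sum_mono] abs_truncated_le)
  hence "\<bar>\<Sum>i\<in>A. truncated (b i) T (u i)\<bar>\<^sup>2 \<le> (real (card A) * T)\<^sup>2"
    by (intro power_mono) auto
  thus ?thesis by simp
qed

lemma indicator_le_sq_div_sq:
  fixes x s :: real
  assumes "x > 0"
  shows "(if x \<le> \<bar>s\<bar> then 1 else 0) \<le> s\<^sup>2 / x\<^sup>2"
proof (cases "x \<le> \<bar>s\<bar>")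
  case True
  hence "x\<^sup>2 \<le> s\<^sup>2" using assms by (metis abs_ge_zero less_le power2_abs power_mono)
  thus ?thesis using True assms by simp
qed simp

lemma sum_eq_jump_plus_truncated:
  assumes "finite I" "j \<in> I" "\<forall>k\<in>I-{j}. \<not> T < \<bar>b k * u k\<bar>"
  shows "(\<Sum>i\<in>I. b i * u i) = b j * u j + (\<Sum>i\<in>I-{j}. truncated (b i) T (u i))"
proof -
  have "(\<Sum>i\<in>I-{j}. truncated (b i) T (u i)) = (\<Sum>i\<in>I-{j}. b i * u i)"
    using assms(3) by (intro sum.cong refl) (auto simp: truncated_def not_less)
  thus ?thesis using assms(1,2) by (simp add: sum.remove)
qed

lemma two_jumps_le_sum:
  assumes "finite I" "j \<in> I" "k \<in> I" "k \<noteq> j" "T < \<bar>b j * u j\<bar>" "T < \<bar>b k * u k\<bar>"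
  shows "1 \<le> (\<Sum>j\<in>I. \<Sum>k\<in>I-{j}. exceeds (b j) T (u j) * exceeds (b k) T (u k))"
proof -
  have "1 = exceeds (b j) T (u j) * exceeds (b k) T (u k)" using assms by (simp add: exceeds_def)
  also have "\<dots> \<le> (\<Sum>k\<in>I-{j}. exceeds (b j) T (u j) * exceeds (b k) T (u k))"
    by (rule member_le_sum) (use assms in \<open>auto intro: mult_nonneg_nonneg exceeds_nonneg\<close>)
  also have "\<dots> \<le> (\<Sum>j\<in>I. \<Sum>k\<in>I-{j}. exceeds (b j) T (u j) * exceeds (b k) T (u k))"
    by (rule member_le_sum) (use assms in \<open>auto intro!: sum_nonneg mult_nonneg_nonneg exceeds_nonneg\<close>)
  finally show ?thesis .
qed

lemma indicator_abs_sum_gt_le: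
  fixes u b :: "nat \<Rightarrow> real" and x \<epsilon> T :: real
  assumes fin: "finite I" and x: "x > 0" and e: "0 < \<epsilon>" "\<epsilon> < 1"
  shows "(if x < \<bar>\<Sum>i\<in>I. b i * u i\<bar> then 1 else 0)
    \<le> (\<Sum>i\<in>I. truncated (b i) T (u i))\<^sup>2 / x\<^sup>2
     + (\<Sum>j\<in>I. \<Sum>k\<in>I-{j}. exceeds (b j) T (u j) * exceeds (b k) T (u k))
     + (\<Sum>j\<in>I. exceeds (b j) ((1-\<epsilon>)*x) (u j))
     + (\<Sum>j\<in>I. exceeds (b j) T (u j) * ((\<Sum>i\<in>I-{j}. truncated (b i) T (u i))\<^sup>2 / (\<epsilon>*x)\<^sup>2))"
    (is "?L \<le> ?Z + ?D + ?A + ?W")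
proof -
  have nonneg: "0 \<le> ?Z" "0 \<le> ?D" "0 \<le> ?A" "0 \<le> ?W"
    by (auto intro!: sum_nonneg mult_nonneg_nonneg divide_nonneg_nonneg exceeds_nonneg)
  consider "\<not> x < \<bar>\<Sum>i\<in>I. b i * u i\<bar>" | "\<forall>j\<in>I. \<not> T < \<bar>b j * u j\<bar>"
    | j k where "j \<in> I" "k \<in> I" "k \<noteq> j" "T < \<bar>b j * u j\<bar>" "T < \<bar>b k * u k\<bar>"
    | j where "j \<in> I" "T < \<bar>b j * u j\<bar>" "\<forall>k\<in>I-{j}. \<not> T < \<bar>b k * u k\<bar>"
    by blast
  thus ?thesis
  proof cases
    case 1 thus ?thesis using nonneg by simp
  next
    case 2
    hence "(\<Sum>i\<in>I. truncated (b i) T (u i)) = (\<Sum>i\<in>I. b i * u i)"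
      by (intro sum.cong) (auto simp: truncated_def)
    hence "?L \<le> ?Z" using indicator_le_sq_div_sq[OF x, of "\<Sum>i\<in>I. b i * u i"] by auto
    thus ?thesis using nonneg by linarith
  next
    case 3
    hence "1 \<le> ?D" using two_jumps_le_sum[OF fin] by blast
    hence "?L \<le> ?D" by simp
    thus ?thesis using nonneg by linarith
  next
    case (4 j)
    note S = sum_eq_jump_plus_truncated[OF fin 4(1,3)]
    show ?thesis
    proof (cases "(1-\<epsilon>)*x < \<bar>b j * u j\<bar>")
      case True
      have "?L \<le> exceeds (b j) ((1-\<epsilon>)*x) (u j)" using True by (simp add: exceeds_def)
      also have "\<dots> \<le> ?A" by (rule member_le_sum) (use 4 fin in \<open>auto intro: exceeds_nonneg\<close>)
      finally show ?thesis using nonneg by linarith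
    next
      case False
      have "?L \<le> (\<Sum>i\<in>I-{j}. truncated (b i) T (u i))\<^sup>2 / (\<epsilon>*x)\<^sup>2"
      proof (cases "x < \<bar>\<Sum>i\<in>I. b i * u i\<bar>")
        case True
        have "(1-\<epsilon>)*x = x - \<epsilon>*x" by (simp add: algebra_simps)
        hence "\<epsilon>*x \<le> \<bar>\<Sum>i\<in>I-{j}. truncated (b i) T (u i)\<bar>"
          using True False S abs_triangle_ineq[of "b j * u j" "\<Sum>i\<in>I-{j}. truncated (b i) T (u i)"]
          by linarith
        thus ?thesis
          using True indicator_le_sq_div_sq[of "\<epsilon>*x" "\<Sum>i\<in>I-{j}. truncated (b i) T (u i)"] x e by simp
      qed simp
      also have "\<dots> = exceeds (b j) T (u j) * ((\<Sum>i\<in>I-{j}. truncated (b i) T (u i))\<^sup>2 / (\<epsilon>*x)\<^sup>2)"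
        using 4 by (simp add: exceeds_def)
      also have "\<dots> \<le> ?W"
        by (rule member_le_sum) (use 4 fin in \<open>auto intro!: mult_nonneg_nonneg divide_nonneg_nonneg exceeds_nonneg\<close>)
      finally show ?thesis using nonneg by linarith
    qed
  qed
qed

lemma single_jump_term_le:
  fixes u b :: "nat \<Rightarrow> real" and x \<epsilon> T :: real
  assumes fin: "finite I" and j: "j \<in> I" and x: "x > 0" and e: "0 < \<epsilon>" and T: "T \<le> (1+\<epsilon>)*x"
  shows "exceeds (b j) ((1+\<epsilon>)*x) (u j) - (\<Sum>k\<in>I-{j}. exceeds (b j) T (u j) * exceeds (b k) T (u k))
     - exceeds (b j) T (u j) * ((\<Sum>i\<in>I-{j}. truncated (b i) T (u i))\<^sup>2 / (\<epsilon>*x)\<^sup>2)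
    \<le> (if (1+\<epsilon>)*x < \<bar>b j * u j\<bar> \<and> (\<forall>k\<in>I-{j}. \<not> T < \<bar>b k * u k\<bar>)
          \<and> \<bar>\<Sum>i\<in>I-{j}. truncated (b i) T (u i)\<bar> < \<epsilon>*x then 1 else 0)"
    (is "?A - ?D - ?W \<le> ?E")
proof -
  have D: "0 \<le> ?D" and W: "0 \<le> ?W" and A: "?A \<le> 1"
    by (auto intro!: sum_nonneg mult_nonneg_nonneg divide_nonneg_nonneg exceeds_nonneg exceeds_le_1)
  show ?thesis
  proof (cases "(1+\<epsilon>)*x < \<bar>b j * u j\<bar>")
    case False
    hence "?A = 0" by (simp add: exceeds_def)
    thus ?thesis using D W by simp
  next
    case big: True
    hence Jj: "exceeds (b j) T (u j) = 1" using T by (simp add: exceeds_def)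
    consider k where "k \<in> I-{j}" "T < \<bar>b k * u k\<bar>"
      | "\<forall>k\<in>I-{j}. \<not> T < \<bar>b k * u k\<bar>" "\<epsilon>*x \<le> \<bar>\<Sum>i\<in>I-{j}. truncated (b i) T (u i)\<bar>"
      | "\<forall>k\<in>I-{j}. \<not> T < \<bar>b k * u k\<bar>" "\<bar>\<Sum>i\<in>I-{j}. truncated (b i) T (u i)\<bar> < \<epsilon>*x"
      by force
    thus ?thesis
    proof cases
      case (1 k)
      have "1 = exceeds (b j) T (u j) * exceeds (b k) T (u k)" using Jj 1 by (simp add: exceeds_def)
      also have "\<dots> \<le> ?D"
        by (rule member_le_sum) (use 1 fin in \<open>auto intro: mult_nonneg_nonneg exceeds_nonneg\<close>)
      finally show ?thesis using A W by simp
    next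
      case 2
      hence "1 \<le> ?W" using indicator_le_sq_div_sq[of "\<epsilon>*x" "\<Sum>i\<in>I-{j}. truncated (b i) T (u i)"] x e Jj
        by simp
      thus ?thesis using A D by simp
    next
      case 3
      thus ?thesis using big A D W by simp
    qed
  qed
qed

lemma indicator_abs_sum_gt_ge:
  fixes u b :: "nat \<Rightarrow> real" and x \<epsilon> T :: real
  assumes fin: "finite I" and x: "x > 0" and e: "0 < \<epsilon>" and T: "T \<le> (1+\<epsilon>)*x"
  shows "(\<Sum>j\<in>I. exceeds (b j) ((1+\<epsilon>)*x) (u j))
     - (\<Sum>j\<in>I. \<Sum>k\<in>I-{j}. exceeds (b j) T (u j) * exceeds (b k) T (u k))
     - (\<Sum>j\<in>I. exceeds (b j) T (u j) * ((\<Sum>i\<in>I-{j}. truncated (b i) T (u i))\<^sup>2 / (\<epsilon>*x)\<^sup>2))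
     \<le> (if x < \<bar>\<Sum>i\<in>I. b i * u i\<bar> then 1 else 0)"
proof -
  define E where "E j \<longleftrightarrow> (1+\<epsilon>)*x < \<bar>b j * u j\<bar> \<and> (\<forall>k\<in>I-{j}. \<not> T < \<bar>b k * u k\<bar>)
      \<and> \<bar>\<Sum>i\<in>I-{j}. truncated (b i) T (u i)\<bar> < \<epsilon>*x" for j
  have "(\<Sum>j\<in>I. (if E j then 1 else 0)) \<le> (if x < \<bar>\<Sum>i\<in>I. b i * u i\<bar> then 1 else 0::real)"
  proof (cases "\<exists>j\<in>I. E j")
    case True
    then obtain j where j: "j \<in> I" "E j" by blast
    have "\<not> E k" if "k \<in> I" "k \<noteq> j" for k
      using j that T unfolding E_def by force
    hence "(\<Sum>j\<in>I. (if E j then 1 else 0::real)) = 1"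
      using j fin by (simp add: sum.remove sum.neutral)
    moreover have "x < \<bar>\<Sum>i\<in>I. b i * u i\<bar>"
    proof -
      define r where "r = (\<Sum>i\<in>I-{j}. truncated (b i) T (u i))"
      have small: "\<forall>k\<in>I-{j}. \<not> T < \<bar>b k * u k\<bar>" and "(1+\<epsilon>)*x < \<bar>b j * u j\<bar>" "\<bar>r\<bar> < \<epsilon>*x"
        using j unfolding E_def r_def by auto
      moreover have "\<bar>b j * u j\<bar> \<le> \<bar>b j * u j + r\<bar> + \<bar>r\<bar>"
        using abs_triangle_ineq[of "b j * u j + r" "-r"] by simp
      moreover have "(1+\<epsilon>)*x = x + \<epsilon>*x" by (simp add: algebra_simps)
      ultimately show ?thesis using sum_eq_jump_plus_truncated[OF fin j(1) small] unfolding r_def by linarith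
    qed
    ultimately show ?thesis by simp
  qed simp
  moreover have "(\<Sum>j\<in>I. exceeds (b j) ((1+\<epsilon>)*x) (u j) - (\<Sum>k\<in>I-{j}. exceeds (b j) T (u j) * exceeds (b k) T (u k))
     - exceeds (b j) T (u j) * ((\<Sum>i\<in>I-{j}. truncated (b i) T (u i))\<^sup>2 / (\<epsilon>*x)\<^sup>2))
     \<le> (\<Sum>j\<in>I. (if E j then 1 else 0))"
    unfolding E_def by (intro sum_mono single_jump_term_le[OF fin _ x e T])
  ultimately show ?thesis by (simp add: sum_subtractf)
qed

section \<open>Independent identically distributed sequences\<close>

lemma abs_integral_le_integral:
  fixes f g :: "'a \<Rightarrow> real"
  assumes "integrable M f" "integrable M g" "\<And>x. x \<in> space M \<Longrightarrow> \<bar>f x\<bar> \<le> g x"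
  shows "\<bar>\<integral>x. f x \<partial>M\<bar> \<le> (\<integral>x. g x \<partial>M)"
proof -
  have "\<bar>\<integral>x. f x \<partial>M\<bar> \<le> (\<integral>x. \<bar>f x\<bar> \<partial>M)"
    using integral_norm_bound[of M f] by simp
  also have "\<dots> \<le> (\<integral>x. g x \<partial>M)" using assms by (intro integral_mono) auto
  finally show ?thesis .
qed

lemma double_sum_diag_le:
  fixes a c :: "nat \<Rightarrow> real"
  assumes "finite I"
  shows "(\<Sum>i\<in>I. \<Sum>k\<in>I. if i = k then a i else c i * c k) \<le> (\<Sum>i\<in>I. a i) + (\<Sum>i\<in>I. \<bar>c i\<bar>)\<^sup>2"
proof -
  have "(\<Sum>i\<in>I. \<Sum>k\<in>I. if i = k then a i else c i * c k)
      \<le> (\<Sum>i\<in>I. \<Sum>k\<in>I. (if i = k then a i else 0) + \<bar>c i\<bar> * \<bar>c k\<bar>)"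
    by (intro sum_mono) (auto simp: abs_mult[symmetric])
  also have "\<dots> = (\<Sum>i\<in>I. \<Sum>k\<in>I. if i = k then a i else 0) + (\<Sum>i\<in>I. \<Sum>k\<in>I. \<bar>c i\<bar> * \<bar>c k\<bar>)"
    by (simp only: sum.distrib)
  also have "\<dots> = (\<Sum>i\<in>I. a i) + (\<Sum>i\<in>I. \<bar>c i\<bar>)\<^sup>2"
    using assms by (simp add: power2_eq_square sum_product sum.delta)
  finally show ?thesis .
qed

locale iid_seq = prob_space M for M :: "'a measure" +
  fixes X :: "nat \<Rightarrow> 'a \<Rightarrow> real"
  assumes X_measurable[measurable]: "\<And>i. X i \<in> borel_measurable M"
    and indep: "indep_vars (\<lambda>_. borel) X {1..}"
    and ident: "\<And>j. j \<ge> 1 \<Longrightarrow> distr M borel (X j) = distr M borel (X 1)"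
begin

lemma integral_ident:
  fixes f :: "real \<Rightarrow> real"
  assumes "j \<ge> 1" and f[measurable]: "f \<in> borel_measurable borel"
  shows "(\<integral>\<omega>. f (X j \<omega>) \<partial>M) = (\<integral>\<omega>. f (X 1 \<omega>) \<partial>M)"
proof -
  have "(\<integral>\<omega>. f (X j \<omega>) \<partial>M) = integral\<^sup>L (distr M borel (X j)) f"
    by (rule integral_distr[symmetric]) auto
  also have "\<dots> = integral\<^sup>L (distr M borel (X 1)) f" using ident[OF assms(1)] by simp
  also have "\<dots> = (\<integral>\<omega>. f (X 1 \<omega>) \<partial>M)" by (rule integral_distr) auto
  finally show ?thesis .
qed

lemma integrable_if_bounded:
  fixes h :: "'a \<Rightarrow> real" and B :: real
  assumes [measurable]: "h \<in> borel_measurable M" and "\<And>\<omega>. \<bar>h \<omega>\<bar> \<le> B"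
  shows "integrable M h"
  using assms by (intro integrable_const_bound[where B=B]) auto

lemma integral_prod_indep:
  fixes f :: "nat \<Rightarrow> real \<Rightarrow> real" and B :: real
  assumes fin: "finite I" and sub: "I \<subseteq> {1..}"
    and fm: "\<And>i. i \<in> I \<Longrightarrow> f i \<in> borel_measurable borel"
    and fb: "\<And>i y. i \<in> I \<Longrightarrow> \<bar>f i y\<bar> \<le> B"
  shows "(\<integral>\<omega>. (\<Prod>i\<in>I. f i (X i \<omega>)) \<partial>M) = (\<Prod>i\<in>I. \<integral>\<omega>. f i (X i \<omega>) \<partial>M)"
proof -
  have ind: "indep_vars (\<lambda>_. borel) (\<lambda>i \<omega>. f i (X i \<omega>)) I"
    by (rule indep_vars_compose2[OF indep_vars_subset[OF indep sub]]) (use fm in auto)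
  have "\<And>i. i \<in> I \<Longrightarrow> integrable M (\<lambda>\<omega>. f i (X i \<omega>))"
  proof -
    fix i assume i: "i \<in> I"
    note [measurable] = fm[OF i]
    show "integrable M (\<lambda>\<omega>. f i (X i \<omega>))" by (rule integrable_if_bounded[where B=B]) (use fb[OF i] in auto)
  qed
  thus ?thesis by (intro indep_vars_lebesgue_integral[OF fin ind])
qed

lemma prob_le_integral:
  fixes f :: "'a \<Rightarrow> real"
  assumes S: "S \<in> sets M" and le: "\<And>\<omega>. \<omega> \<in> space M \<Longrightarrow> indicator S \<omega> \<le> f \<omega>"
    and fi: "integrable M f"
  shows "prob S \<le> (\<integral>\<omega>. f \<omega> \<partial>M)"
proof -
  have "prob S = (\<integral>\<omega>. indicator S \<omega> \<partial>M)" using S sets.sets_into_space[OF S]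
    by (simp add: Int_absorb2)
  also have "\<dots> \<le> (\<integral>\<omega>. f \<omega> \<partial>M)"
    by (rule integral_mono) (use S fi le in \<open>auto intro!: integrable_real_indicator simp: less_top[symmetric]\<close>)
  finally show ?thesis .
qed

lemma integral_le_prob:
  fixes f :: "'a \<Rightarrow> real"
  assumes S: "S \<in> sets M" and le: "\<And>\<omega>. \<omega> \<in> space M \<Longrightarrow> f \<omega> \<le> indicator S \<omega>"
    and fi: "integrable M f"
  shows "(\<integral>\<omega>. f \<omega> \<partial>M) \<le> prob S"
proof -
  have "(\<integral>\<omega>. f \<omega> \<partial>M) \<le> (\<integral>\<omega>. indicator S \<omega> \<partial>M)"
    by (rule integral_mono) (use S fi le in \<open>auto intro!: integrable_real_indicator simp: less_top[symmetric]\<close>)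
  also have "\<dots> = prob S" using S sets.sets_into_space[OF S]
    by (simp add: Int_absorb2)
  finally show ?thesis .
qed

lemma integral_mult_pair_indep:
  fixes g :: "real \<Rightarrow> real" and h :: "nat \<Rightarrow> real \<Rightarrow> real" and Bg B :: real
  assumes sub: "I \<subseteq> {1..}" and j: "j \<ge> 1" "j \<notin> I" and ik: "i \<in> I" "k \<in> I"
    and gm: "g \<in> borel_measurable borel" and gb: "\<And>y. \<bar>g y\<bar> \<le> Bg"
    and hm: "\<And>i. i \<in> I \<Longrightarrow> h i \<in> borel_measurable borel"
    and hb: "\<And>i y. i \<in> I \<Longrightarrow> \<bar>h i y\<bar> \<le> B"
  shows "(\<integral>\<omega>. g (X j \<omega>) * (h i (X i \<omega>) * h k (X k \<omega>)) \<partial>M)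
      = (\<integral>\<omega>. g (X j \<omega>) \<partial>M) * (if i = k then (\<integral>\<omega>. (h i (X i \<omega>))\<^sup>2 \<partial>M)
          else (\<integral>\<omega>. h i (X i \<omega>) \<partial>M) * (\<integral>\<omega>. h k (X k \<omega>) \<partial>M))"
proof (cases "i = k")
  case True
  define F where "F l = (if l = j then g else (\<lambda>y. (h i y)\<^sup>2))" for l
  have "(\<integral>\<omega>. (\<Prod>l\<in>{j,i}. F l (X l \<omega>)) \<partial>M) = (\<Prod>l\<in>{j,i}. \<integral>\<omega>. F l (X l \<omega>) \<partial>M)"
  proof (rule integral_prod_indep[where B="max Bg (B\<^sup>2)"])
    show "\<bar>F l y\<bar> \<le> max Bg (B\<^sup>2)" if "l \<in> {j,i}" for l y
    proof -
      have "\<bar>h i y\<bar>\<^sup>2 \<le> B\<^sup>2" using hb[OF ik(1), of y] by (intro power_mono) auto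
      thus ?thesis using gb[of y] by (auto simp: F_def)
    qed
  qed (use j sub ik gm hm in \<open>auto simp: F_def\<close>)
  moreover have "j \<noteq> i" using j ik by auto
  ultimately show ?thesis using True by (simp add: F_def power2_eq_square mult_ac)
next
  case False
  define F where "F l = (if l = j then g else if l = i then h i else h k)" for l
  have "(\<integral>\<omega>. (\<Prod>l\<in>{j,i,k}. F l (X l \<omega>)) \<partial>M) = (\<Prod>l\<in>{j,i,k}. \<integral>\<omega>. F l (X l \<omega>) \<partial>M)"
    by (rule integral_prod_indep[where B="max Bg B"])
      (use j sub ik gm hm gb hb in \<open>auto simp: F_def intro: le_max_iff_disj[THEN iffD2]\<close>)
  moreover have "j \<noteq> i" "j \<noteq> k" using j ik by auto
  ultimately show ?thesis using False by (simp add: F_def mult_ac)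
qed

lemma integral_mult_sum_sq_le:
  fixes g :: "real \<Rightarrow> real" and h :: "nat \<Rightarrow> real \<Rightarrow> real" and Bg B :: real
  assumes fin: "finite I" and sub: "I \<subseteq> {1..}" and j: "j \<ge> 1" "j \<notin> I"
    and gm[measurable]: "g \<in> borel_measurable borel" and gb: "\<And>y. 0 \<le> g y" "\<And>y. g y \<le> Bg"
    and hm: "\<And>i. i \<in> I \<Longrightarrow> h i \<in> borel_measurable borel"
    and hb: "\<And>i y. i \<in> I \<Longrightarrow> \<bar>h i y\<bar> \<le> B"
  shows "(\<integral>\<omega>. g (X j \<omega>) * (\<Sum>i\<in>I. h i (X i \<omega>))\<^sup>2 \<partial>M)
     \<le> (\<integral>\<omega>. g (X j \<omega>) \<partial>M) * ((\<Sum>i\<in>I. \<integral>\<omega>. (h i (X i \<omega>))\<^sup>2 \<partial>M) + (\<Sum>i\<in>I. \<bar>\<integral>\<omega>. h i (X i \<omega>) \<partial>M\<bar>)\<^sup>2)"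
proof -
  have gb': "\<bar>g y\<bar> \<le> Bg" for y using gb[of y] by simp
  have "0 \<le> Bg" using gb'[of 0] by linarith
  have integrable: "integrable M (\<lambda>\<omega>. g (X j \<omega>) * (h i (X i \<omega>) * h k (X k \<omega>)))"
    if "i \<in> I" "k \<in> I" for i k
  proof -
    note [measurable] = hm[OF that(1)] hm[OF that(2)]
    show ?thesis
    proof (rule integrable_if_bounded[where B="Bg * (\<bar>B\<bar> * \<bar>B\<bar>)"])
      show "\<bar>g (X j \<omega>) * (h i (X i \<omega>) * h k (X k \<omega>))\<bar> \<le> Bg * (\<bar>B\<bar> * \<bar>B\<bar>)" for \<omega>
        unfolding abs_mult using gb' hb that \<open>0 \<le> Bg\<close>
        by (intro mult_mono) (auto intro: order_trans[OF _ abs_ge_self])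
    qed simp
  qed
  have "(\<integral>\<omega>. g (X j \<omega>) * (\<Sum>i\<in>I. h i (X i \<omega>))\<^sup>2 \<partial>M)
       = (\<integral>\<omega>. (\<Sum>i\<in>I. \<Sum>k\<in>I. g (X j \<omega>) * (h i (X i \<omega>) * h k (X k \<omega>))) \<partial>M)"
  proof (rule arg_cong[where f="integral\<^sup>L M"], rule ext)
    fix \<omega>
    have "(\<Sum>i\<in>I. h i (X i \<omega>))\<^sup>2 = (\<Sum>i\<in>I. \<Sum>k\<in>I. h i (X i \<omega>) * h k (X k \<omega>))"
      by (simp only: power2_eq_square sum_product)
    thus "g (X j \<omega>) * (\<Sum>i\<in>I. h i (X i \<omega>))\<^sup>2 = (\<Sum>i\<in>I. \<Sum>k\<in>I. g (X j \<omega>) * (h i (X i \<omega>) * h k (X k \<omega>)))"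
      by (simp add: sum_distrib_left)
  qed
  also have "\<dots> = (\<Sum>i\<in>I. \<Sum>k\<in>I. (\<integral>\<omega>. g (X j \<omega>) * (h i (X i \<omega>) * h k (X k \<omega>)) \<partial>M))"
    using integrable by (simp add: integrable_sum)
  also have "\<dots> = (\<integral>\<omega>. g (X j \<omega>) \<partial>M) * (\<Sum>i\<in>I. \<Sum>k\<in>I. if i = k then (\<integral>\<omega>. (h i (X i \<omega>))\<^sup>2 \<partial>M)
          else (\<integral>\<omega>. h i (X i \<omega>) \<partial>M) * (\<integral>\<omega>. h k (X k \<omega>) \<partial>M))"
    unfolding sum_distrib_left
    by (intro sum.cong refl integral_mult_pair_indep[OF sub j _ _ gm gb' hm hb])
  also have "\<dots> \<le> (\<integral>\<omega>. g (X j \<omega>) \<partial>M) * ((\<Sum>i\<in>I. \<integral>\<omega>. (h i (X i \<omega>))\<^sup>2 \<partial>M) + (\<Sum>i\<in>I. \<bar>\<integral>\<omega>. h i (X i \<omega>) \<partial>M\<bar>)\<^sup>2)"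
    using gb by (intro mult_left_mono double_sum_diag_le fin integral_nonneg_AE) auto
  finally show ?thesis .
qed

end

section \<open>Power tails and truncated moments\<close>

locale iid_power_tails = iid_seq +
  fixes \<alpha> c0p c0m :: real
  assumes alpha: "0 < \<alpha>" "\<alpha> < 2"
    and tail_pos: "((\<lambda>x. x powr \<alpha> * (1 - prob {\<omega> \<in> space M. X 1 \<omega> \<le> x})) \<longlongrightarrow> c0p) at_top"
    and tail_neg: "((\<lambda>x. \<bar>x\<bar> powr \<alpha> * prob {\<omega> \<in> space M. X 1 \<omega> \<le> x}) \<longlongrightarrow> c0m) at_bot"
begin

definition abs_tail :: "real \<Rightarrow> real" where
  "abs_tail t = prob {\<omega> \<in> space M. \<bar>X 1 \<omega>\<bar> > t}"

text \<open>The left tail is given with \<open>\<le>\<close>; squeezing \<open>{X < -t}\<close> between \<open>{X \<le> -(t+1)}\<close> and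
  \<open>{X \<le> -t}\<close> turns it into a statement about the strict left tail.\<close>

lemma strict_left_tail_asymptotics:
  "((\<lambda>t. t powr \<alpha> * prob {\<omega> \<in> space M. X 1 \<omega> < - t}) \<longlongrightarrow> c0m) at_top"
proof -
  define F where "F x = prob {\<omega> \<in> space M. X 1 \<omega> \<le> x}" for x
  have f: "((\<lambda>s. s powr \<alpha> * F (- s)) \<longlongrightarrow> c0m) at_top"
  proof -
    have "((\<lambda>s. \<bar>- s\<bar> powr \<alpha> * F (- s)) \<longlongrightarrow> c0m) at_top"
      using filterlim_compose[OF tail_neg[folded F_def] filterlim_uminus_at_bot_at_top] by simp
    moreover have "eventually (\<lambda>s. \<bar>- s\<bar> powr \<alpha> * F (- s) = s powr \<alpha> * F (- s)) at_top"
      using eventually_ge_at_top[of "0::real"] by eventually_elim simp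
    ultimately show ?thesis by (rule tendsto_cong[THEN iffD1, rotated])
  qed
  have shift: "filterlim (\<lambda>t::real. t + 1) at_top at_top"
    using filterlim_tendsto_add_at_top[OF tendsto_const[of 1] filterlim_ident] by (simp add: add.commute)
  show ?thesis
  proof (rule tendsto_sandwich)
    have lim1: "((\<lambda>t. t / (t + 1)) \<longlongrightarrow> (1::real)) at_top"
    proof (rule tendsto_cong[THEN iffD1, rotated])
      show "((\<lambda>t. 1 - inverse (t + 1)) \<longlongrightarrow> (1::real)) at_top"
        using tendsto_diff[OF tendsto_const[of 1] tendsto_inverse_0_at_top[OF shift]] by simp
      show "eventually (\<lambda>t::real. 1 - inverse (t + 1) = t / (t + 1)) at_top"
        using eventually_gt_at_top[of "0::real"] by eventually_elim (simp add: field_simps)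
    qed
    have lim2: "((\<lambda>t. (t+1) powr \<alpha> * F (- (t+1))) \<longlongrightarrow> c0m) at_top"
      using filterlim_compose[OF f shift] by simp
    have "((\<lambda>t. (t / (t+1)) powr \<alpha> * ((t+1) powr \<alpha> * F (- (t+1)))) \<longlongrightarrow> 1 powr \<alpha> * c0m) at_top"
      by (rule tendsto_mult[OF tendsto_powr[OF lim1 tendsto_const] lim2]) simp
    thus "((\<lambda>t. (t / (t+1)) powr \<alpha> * ((t+1) powr \<alpha> * F (- (t+1)))) \<longlongrightarrow> c0m) at_top" by simp
    show "eventually (\<lambda>t. (t / (t+1)) powr \<alpha> * ((t+1) powr \<alpha> * F (- (t+1)))
        \<le> t powr \<alpha> * prob {\<omega> \<in> space M. X 1 \<omega> < - t}) at_top"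
      using eventually_gt_at_top[of "0::real"]
    proof eventually_elim
      case (elim t)
      have "(t / (t+1)) powr \<alpha> * ((t+1) powr \<alpha> * F (- (t+1))) = t powr \<alpha> * F (- (t+1))"
        using elim by (simp add: powr_divide)
      also have "\<dots> \<le> t powr \<alpha> * prob {\<omega> \<in> space M. X 1 \<omega> < - t}" unfolding F_def
        by (intro mult_left_mono finite_measure_mono) auto
      finally show ?case .
    qed
    show "eventually (\<lambda>t. t powr \<alpha> * prob {\<omega> \<in> space M. X 1 \<omega> < - t} \<le> t powr \<alpha> * F (- t)) at_top"
      using eventually_gt_at_top[of "0::real"]
      by eventually_elim (auto simp: F_def intro!: mult_left_mono finite_measure_mono)
  qed (use f in simp)
qed

lemma abs_tail_asymptotics: "((\<lambda>t. t powr \<alpha> * abs_tail t) \<longlongrightarrow> c0p + c0m) at_top"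
proof -
  have split: "abs_tail t = (1 - prob {\<omega> \<in> space M. X 1 \<omega> \<le> t}) + prob {\<omega> \<in> space M. X 1 \<omega> < - t}"
    if "t \<ge> 0" for t
  proof -
    have "{\<omega> \<in> space M. \<bar>X 1 \<omega>\<bar> > t}
        = (space M - {\<omega> \<in> space M. X 1 \<omega> \<le> t}) \<union> {\<omega> \<in> space M. X 1 \<omega> < - t}"
      using that by auto
    hence "abs_tail t = prob (space M - {\<omega> \<in> space M. X 1 \<omega> \<le> t}) + prob {\<omega> \<in> space M. X 1 \<omega> < - t}"
      unfolding abs_tail_def using that by (simp only:) (rule finite_measure_Union, auto)
    thus ?thesis by (subst (asm) prob_compl) auto
  qed
  have "((\<lambda>t. t powr \<alpha> * (1 - prob {\<omega> \<in> space M. X 1 \<omega> \<le> t})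
      + t powr \<alpha> * prob {\<omega> \<in> space M. X 1 \<omega> < - t}) \<longlongrightarrow> c0p + c0m) at_top"
    by (intro tendsto_add tail_pos strict_left_tail_asymptotics)
  moreover have "eventually (\<lambda>t. t powr \<alpha> * (1 - prob {\<omega> \<in> space M. X 1 \<omega> \<le> t})
      + t powr \<alpha> * prob {\<omega> \<in> space M. X 1 \<omega> < - t} = t powr \<alpha> * abs_tail t) at_top"
    using eventually_ge_at_top[of "0::real"] by eventually_elim (simp add: split algebra_simps)
  ultimately show ?thesis by (rule tendsto_cong[THEN iffD1, rotated])
qed

lemma abs_tail_le_powr: "\<exists>C t0. C > 0 \<and> t0 > 0 \<and> (\<forall>t\<ge>t0. abs_tail t \<le> C * t powr (-\<alpha>))"
proof -
  obtain t1 where t1: "\<And>t. t \<ge> t1 \<Longrightarrow> t powr \<alpha> * abs_tail t < c0p + c0m + 1"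
    using order_tendstoD(2)[OF abs_tail_asymptotics, of "c0p + c0m + 1"]
    by (auto simp: eventually_at_top_linorder)
  define C where "C = max (c0p + c0m + 1) 1"
  have "abs_tail t \<le> C * t powr (-\<alpha>)" if t: "t \<ge> max t1 1" for t
  proof -
    have "abs_tail t = t powr (-\<alpha>) * (t powr \<alpha> * abs_tail t)" using t by (simp add: powr_minus)
    also have "\<dots> \<le> t powr (-\<alpha>) * C"
      using t1[of t] t unfolding C_def by (intro mult_left_mono) auto
    finally show ?thesis by (simp add: mult.commute)
  qed
  thus ?thesis by (intro exI[of _ C] exI[of _ "max t1 1"]) (auto simp: C_def)
qed

lemma integral_indicator_abs_gt: "(\<integral>\<omega>. (if c < \<bar>X 1 \<omega>\<bar> then 1 else 0) \<partial>M) = abs_tail c"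
proof -
  have "(\<integral>\<omega>. (if c < \<bar>X 1 \<omega>\<bar> then 1 else 0) \<partial>M) = (\<integral>\<omega>. indicator {\<omega> \<in> space M. c < \<bar>X 1 \<omega>\<bar>} \<omega> \<partial>M)"
    by (rule Bochner_Integration.integral_cong) (auto simp: indicator_def)
  also have "\<dots> = abs_tail c" by (simp add: abs_tail_def Int_absorb2)
  finally show ?thesis .
qed

lemma integrable_scaled_indicator_abs_gt: "integrable M (\<lambda>\<omega>. b * (if c < \<bar>X 1 \<omega>\<bar> then 1 else 0::real))"
  by (rule integrable_if_bounded[where B="\<bar>b\<bar>"]) auto

lemma integral_step_function:
  assumes "finite A"
  shows "(\<integral>\<omega>. a + (\<Sum>k\<in>A. b k * (if c k < \<bar>X 1 \<omega>\<bar> then 1 else 0)) \<partial>M) = a + (\<Sum>k\<in>A. b k * abs_tail (c k))"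
proof -
  have "(\<integral>\<omega>. a + (\<Sum>k\<in>A. b k * (if c k < \<bar>X 1 \<omega>\<bar> then 1 else 0)) \<partial>M)
      = (\<integral>\<omega>. a \<partial>M) + (\<Sum>k\<in>A. (\<integral>\<omega>. b k * (if c k < \<bar>X 1 \<omega>\<bar> then 1 else 0) \<partial>M))"
    by (simp only: Bochner_Integration.integral_add[OF integrable_const
          Bochner_Integration.integrable_sum[OF integrable_scaled_indicator_abs_gt]]
        Bochner_Integration.integral_sum[OF integrable_scaled_indicator_abs_gt])
  thus ?thesis by (simp only: integral_mult_right_zero integral_indicator_abs_gt) (simp add: prob_space)
qed

lemma truncated_moment_le_dyadic:
  assumes p: "p > 0" and t0: "t0 > 0" and N: "t0 * 2^N \<le> R" "R < t0 * 2^(Suc N)"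
  shows "(\<integral>\<omega>. (if \<bar>X 1 \<omega>\<bar> \<le> R then \<bar>X 1 \<omega>\<bar> powr p else 0) \<partial>M)
    \<le> (2*t0) powr p + (\<Sum>k<N. (R/2^k) powr p * abs_tail (R/2^(Suc k)))"
proof -
  have R: "R > 0" using t0 N(1) by (smt (verit) mult_pos_pos zero_less_power)
  define f where "f \<omega> = (2*t0) powr p + (\<Sum>k<N. (R/2^k) powr p * (if R/2^(Suc k) < \<bar>X 1 \<omega>\<bar> then 1 else 0))" for \<omega>
  have f_nonneg: "0 \<le> f \<omega>" for \<omega> unfolding f_def by (intro add_nonneg_nonneg sum_nonneg) auto
  have "(\<integral>\<omega>. (if \<bar>X 1 \<omega>\<bar> \<le> R then \<bar>X 1 \<omega>\<bar> powr p else 0) \<partial>M) \<le> (\<integral>\<omega>. f \<omega> \<partial>M)"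
  proof (rule integral_mono)
    show "integrable M (\<lambda>\<omega>. (if \<bar>X 1 \<omega>\<bar> \<le> R then \<bar>X 1 \<omega>\<bar> powr p else 0))"
      by (rule integrable_if_bounded[where B="R powr p"]) (use p R in \<open>auto intro: powr_mono2\<close>)
    show "integrable M f" unfolding f_def
      by (intro Bochner_Integration.integrable_add Bochner_Integration.integrable_sum
          integrable_scaled_indicator_abs_gt) simp
    show "(if \<bar>X 1 \<omega>\<bar> \<le> R then \<bar>X 1 \<omega>\<bar> powr p else 0) \<le> f \<omega>" for \<omega>
      using abs_powr_le_dyadic_sum[OF t0 p N, of "X 1 \<omega>"] f_nonneg[of \<omega>] by (auto simp: f_def)
  qed
  also have "(\<integral>\<omega>. f \<omega> \<partial>M) = (2*t0) powr p + (\<Sum>k<N. (R/2^k) powr p * abs_tail (R/2^(Suc k)))"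
    unfolding f_def by (rule integral_step_function) simp
  finally show ?thesis .
qed

lemma truncated_moment_le:
  assumes p: "p > \<alpha>"
  shows "\<exists>K R0. R0 > 0 \<and> (\<forall>R\<ge>R0. (\<integral>\<omega>. (if \<bar>X 1 \<omega>\<bar> \<le> R then \<bar>X 1 \<omega>\<bar> powr p else 0) \<partial>M) \<le> K * R powr (p - \<alpha>))"
proof -
  obtain C t0 where C: "C > 0" "t0 > 0" "\<And>t. t \<ge> t0 \<Longrightarrow> abs_tail t \<le> C * t powr (-\<alpha>)"
    using abs_tail_le_powr by blast
  have p0: "p > 0" using p alpha by simp
  define q where "q = 2 powr (\<alpha> - p)"
  have "2 powr (\<alpha> - p) < 2 powr 0" using p by (intro powr_less_mono) auto
  hence q: "0 < q" "q < 1" by (auto simp: q_def)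
  define K where "K = (2*t0) powr p * t0 powr (\<alpha> - p) + C * 2 powr \<alpha> / (1 - q)"
  have "(\<integral>\<omega>. (if \<bar>X 1 \<omega>\<bar> \<le> R then \<bar>X 1 \<omega>\<bar> powr p else 0) \<partial>M) \<le> K * R powr (p - \<alpha>)"
    if R: "R \<ge> t0" for R
  proof -
    have R0: "R > 0" using R C by simp
    obtain N where N: "t0 * 2^N \<le> R" "R < t0 * 2^(Suc N)" using exists_dyadic_bracket[OF C(2) R] by blast
    have "(\<Sum>k<N. (R/2^k) powr p * abs_tail (R/2^(Suc k))) \<le> (\<Sum>k<N. C * 2 powr \<alpha> * R powr (p - \<alpha>) * q^k)"
    proof (rule sum_mono)
      fix k assume k: "k \<in> {..<N}"
      have "(2::real)^(Suc k) \<le> 2^N" using k by (intro power_increasing) auto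
      hence "t0 * 2^(Suc k) \<le> R" using N(1) C(2) by (smt (verit) mult_left_mono)
      hence "t0 \<le> R/2^(Suc k)" by (simp add: field_simps)
      hence "(R/2^k) powr p * abs_tail (R/2^(Suc k)) \<le> (R/2^k) powr p * (C * (R/2^(Suc k)) powr (-\<alpha>))"
        using C(3) by (intro mult_left_mono) simp_all
      hence "(R/2^k) powr p * abs_tail (R/2^(Suc k)) \<le> C * ((R/2^k) powr p * (R/2^(Suc k)) powr (-\<alpha>))"
        by (simp only: mult_ac)
      thus "(R/2^k) powr p * abs_tail (R/2^(Suc k)) \<le> C * 2 powr \<alpha> * R powr (p - \<alpha>) * q^k"
        unfolding powr_dyadic_halving[OF R0] q_def by simp
    qed
    also have "\<dots> \<le> C * 2 powr \<alpha> * R powr (p - \<alpha>) * (1 / (1 - q))"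
      unfolding sum_distrib_left[symmetric] using C q by (intro mult_left_mono geometric_sum_le) auto
    moreover have "(2*t0) powr p \<le> (2*t0) powr p * t0 powr (\<alpha> - p) * R powr (p - \<alpha>)"
    proof -
      have "1 \<le> (R / t0) powr (p - \<alpha>)" using R C p by (intro ge_one_powr_ge_zero) (auto simp: field_simps)
      also have "(R / t0) powr (p - \<alpha>) = t0 powr (\<alpha> - p) * R powr (p - \<alpha>)"
      proof -
        have "t0 powr (\<alpha> - p) = inverse (t0 powr (p - \<alpha>))" using powr_minus[of t0 "p - \<alpha>"] by simp
        thus ?thesis using C R0 by (simp add: powr_divide field_simps)
      qed
      finally have "1 \<le> t0 powr (\<alpha> - p) * R powr (p - \<alpha>)" .
      from mult_left_mono[OF this, of "(2*t0) powr p"] show ?thesis by (simp add: mult_ac)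
    qed
    ultimately show ?thesis
      using truncated_moment_le_dyadic[OF p0 C(2) N] unfolding K_def by (simp add: algebra_simps)
  qed
  thus ?thesis using C(2) by blast
qed

definition trunc_mean :: "real \<Rightarrow> real" where
  "trunc_mean R = (\<integral>\<omega>. (if \<bar>X 1 \<omega>\<bar> \<le> R then X 1 \<omega> else 0) \<partial>M)"

definition trunc_sq_mean :: "real \<Rightarrow> real" where
  "trunc_sq_mean R = (\<integral>\<omega>. (if \<bar>X 1 \<omega>\<bar> \<le> R then (X 1 \<omega>)\<^sup>2 else 0) \<partial>M)"

lemma trunc_sq_mean_le: "\<exists>K R0. R0 > 0 \<and> (\<forall>R\<ge>R0. trunc_sq_mean R \<le> K * R powr (2 - \<alpha>))"
proof -
  have "trunc_sq_mean R = (\<integral>\<omega>. (if \<bar>X 1 \<omega>\<bar> \<le> R then \<bar>X 1 \<omega>\<bar> powr 2 else 0) \<partial>M)" for R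
    unfolding trunc_sq_mean_def by (rule Bochner_Integration.integral_cong) auto
  thus ?thesis using truncated_moment_le[of 2] alpha by auto
qed

lemma trunc_mean_le_alpha_lt1:
  assumes "\<alpha> < 1"
  shows "\<exists>K R0. R0 > 0 \<and> (\<forall>R\<ge>R0. \<bar>trunc_mean R\<bar> \<le> K * R powr (1 - \<alpha>))"
proof -
  have "\<bar>trunc_mean R\<bar> \<le> (\<integral>\<omega>. (if \<bar>X 1 \<omega>\<bar> \<le> R then \<bar>X 1 \<omega>\<bar> powr 1 else 0) \<partial>M)" for R
    unfolding trunc_mean_def
  proof (rule abs_integral_le_integral)
    show "integrable M (\<lambda>\<omega>. if \<bar>X 1 \<omega>\<bar> \<le> R then X 1 \<omega> else 0)"
      by (rule integrable_if_bounded[where B="\<bar>R\<bar>"]) auto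
    show "integrable M (\<lambda>\<omega>. if \<bar>X 1 \<omega>\<bar> \<le> R then \<bar>X 1 \<omega>\<bar> powr 1 else 0)"
      by (rule integrable_if_bounded[where B="\<bar>R\<bar>"]) auto
  qed auto
  moreover obtain K R0 where "R0 > 0" "\<forall>R\<ge>R0. (\<integral>\<omega>. (if \<bar>X 1 \<omega>\<bar> \<le> R then \<bar>X 1 \<omega>\<bar> powr 1 else 0) \<partial>M) \<le> K * R powr (1 - \<alpha>)"
    using truncated_moment_le[of 1] assms by auto
  ultimately show ?thesis by (meson order_trans)
qed

lemma integral_abs_between_le_dyadic:
  assumes R: "R > 0"
  shows "(\<integral>\<omega>. (if R < \<bar>X 1 \<omega>\<bar> \<and> \<bar>X 1 \<omega>\<bar> \<le> R*2^N then \<bar>X 1 \<omega>\<bar> else 0) \<partial>M)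
    \<le> (\<Sum>k<N. R*2^(Suc k) * abs_tail (R*2^k))"
proof -
  define f where "f \<omega> = 0 + (\<Sum>k<N. R*2^(Suc k) * (if R*2^k < \<bar>X 1 \<omega>\<bar> then 1 else 0))" for \<omega>
  have "(\<integral>\<omega>. (if R < \<bar>X 1 \<omega>\<bar> \<and> \<bar>X 1 \<omega>\<bar> \<le> R*2^N then \<bar>X 1 \<omega>\<bar> else 0) \<partial>M) \<le> (\<integral>\<omega>. f \<omega> \<partial>M)"
  proof (rule integral_mono)
    show "integrable M (\<lambda>\<omega>. (if R < \<bar>X 1 \<omega>\<bar> \<and> \<bar>X 1 \<omega>\<bar> \<le> R*2^N then \<bar>X 1 \<omega>\<bar> else 0))"
      by (rule integrable_if_bounded[where B="\<bar>R*2^N\<bar>"]) auto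
    show "integrable M f" unfolding f_def
      by (intro Bochner_Integration.integrable_add Bochner_Integration.integrable_sum
          integrable_scaled_indicator_abs_gt) simp
    show "(if R < \<bar>X 1 \<omega>\<bar> \<and> \<bar>X 1 \<omega>\<bar> \<le> R*2^N then \<bar>X 1 \<omega>\<bar> else 0) \<le> f \<omega>" for \<omega>
      using abs_le_dyadic_sum[OF R, of "X 1 \<omega>" N] R by (auto simp: f_def intro!: sum_nonneg)
  qed
  also have "(\<integral>\<omega>. f \<omega> \<partial>M) = 0 + (\<Sum>k<N. R*2^(Suc k) * abs_tail (R*2^k))"
    unfolding f_def by (rule integral_step_function) simp
  finally show ?thesis by simp
qed

lemma tendsto_integral_abs_between:
  assumes int: "integrable M (X 1)" and R: "R > 0"
  shows "(\<lambda>N. \<integral>\<omega>. (if R < \<bar>X 1 \<omega>\<bar> \<and> \<bar>X 1 \<omega>\<bar> \<le> R*2^N then \<bar>X 1 \<omega>\<bar> else 0) \<partial>M)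
    \<longlonglongrightarrow> (\<integral>\<omega>. (if R < \<bar>X 1 \<omega>\<bar> then \<bar>X 1 \<omega>\<bar> else 0) \<partial>M)"
proof (rule integral_dominated_convergence[where w="\<lambda>\<omega>. \<bar>X 1 \<omega>\<bar>"])
  show "(\<lambda>\<omega>. if R < \<bar>X 1 \<omega>\<bar> then \<bar>X 1 \<omega>\<bar> else 0) \<in> borel_measurable M" by measurable
  show "(\<lambda>\<omega>. if R < \<bar>X 1 \<omega>\<bar> \<and> \<bar>X 1 \<omega>\<bar> \<le> R*2^N then \<bar>X 1 \<omega>\<bar> else 0) \<in> borel_measurable M" for N
    by measurable
  show "integrable M (\<lambda>\<omega>. \<bar>X 1 \<omega>\<bar>)" using int by simp
  show "AE \<omega> in M. norm (if R < \<bar>X 1 \<omega>\<bar> \<and> \<bar>X 1 \<omega>\<bar> \<le> R*2^N then \<bar>X 1 \<omega>\<bar> else 0) \<le> \<bar>X 1 \<omega>\<bar>" for N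
    by auto
  show "AE \<omega> in M. (\<lambda>N. if R < \<bar>X 1 \<omega>\<bar> \<and> \<bar>X 1 \<omega>\<bar> \<le> R*2^N then \<bar>X 1 \<omega>\<bar> else 0)
      \<longlonglongrightarrow> (if R < \<bar>X 1 \<omega>\<bar> then \<bar>X 1 \<omega>\<bar> else 0)"
  proof (rule AE_I2, rule tendsto_eventually)
    fix \<omega>
    obtain n where "\<bar>X 1 \<omega>\<bar> / R < 2^n" using real_arch_pow[of 2 "\<bar>X 1 \<omega>\<bar> / R"] by auto
    hence n: "\<bar>X 1 \<omega>\<bar> < R * 2^n" using R by (simp add: field_simps)
    have "\<bar>X 1 \<omega>\<bar> \<le> R * 2^N" if "N \<ge> n" for N
      using n R power_increasing[OF that, of "2::real"] by (smt (verit) mult_left_mono)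
    thus "eventually (\<lambda>N. (if R < \<bar>X 1 \<omega>\<bar> \<and> \<bar>X 1 \<omega>\<bar> \<le> R*2^N then \<bar>X 1 \<omega>\<bar> else 0)
        = (if R < \<bar>X 1 \<omega>\<bar> then \<bar>X 1 \<omega>\<bar> else 0)) sequentially"
      unfolding eventually_sequentially by auto
  qed
qed

lemma integral_abs_gt_le:
  assumes a: "\<alpha> > 1" and int: "integrable M (X 1)"
  shows "\<exists>K R0. R0 > 0 \<and> (\<forall>R\<ge>R0. (\<integral>\<omega>. (if R < \<bar>X 1 \<omega>\<bar> then \<bar>X 1 \<omega>\<bar> else 0) \<partial>M) \<le> K * R powr (1 - \<alpha>))"
proof -
  obtain C t0 where C: "C > 0" "t0 > 0" "\<And>t. t \<ge> t0 \<Longrightarrow> abs_tail t \<le> C * t powr (-\<alpha>)"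
    using abs_tail_le_powr by blast
  define q where "q = 2 powr (1 - \<alpha>)"
  have "2 powr (1 - \<alpha>) < 2 powr 0" using a by (intro powr_less_mono) auto
  hence q: "0 < q" "q < 1" by (auto simp: q_def)
  define K where "K = 2 * C / (1 - q)"
  have "(\<integral>\<omega>. (if R < \<bar>X 1 \<omega>\<bar> then \<bar>X 1 \<omega>\<bar> else 0) \<partial>M) \<le> K * R powr (1 - \<alpha>)"
    if R: "R \<ge> t0" for R
  proof (rule tendsto_le[OF sequentially_bot tendsto_const tendsto_integral_abs_between[OF int]])
    have R0: "R > 0" using R C by simp
    have "(\<Sum>k<N. R*2^(Suc k) * abs_tail (R*2^k)) \<le> (\<Sum>k<N. C * 2 * R powr (1 - \<alpha>) * q^k)" for N
    proof (rule sum_mono)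
      fix k
      have "R \<le> R*2^k" using R0 by simp
      hence "abs_tail (R*2^k) \<le> C * (R*2^k) powr (-\<alpha>)" using R by (intro C(3)) simp
      hence "R*2^(Suc k) * abs_tail (R*2^k) \<le> C * (R*2^(Suc k) * (R*2^k) powr (-\<alpha>))"
        using R0 by (simp add: mult_left_mono)
      thus "R*2^(Suc k) * abs_tail (R*2^k) \<le> C * 2 * R powr (1 - \<alpha>) * q^k"
        unfolding powr_dyadic_doubling[OF R0] q_def by simp
    qed
    also have "(\<Sum>k<N. C * 2 * R powr (1 - \<alpha>) * q^k) \<le> C * 2 * R powr (1 - \<alpha>) * (1 / (1 - q))" for N
      unfolding sum_distrib_left[symmetric] using C q by (intro mult_left_mono geometric_sum_le) auto
    also have "\<dots> = K * R powr (1 - \<alpha>)" by (simp add: K_def)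
    finally have "(\<integral>\<omega>. (if R < \<bar>X 1 \<omega>\<bar> \<and> \<bar>X 1 \<omega>\<bar> \<le> R*2^N then \<bar>X 1 \<omega>\<bar> else 0) \<partial>M)
        \<le> K * R powr (1 - \<alpha>)" for N
      using integral_abs_between_le_dyadic[OF R0, of N] by (meson order_trans)
    thus "eventually (\<lambda>N. (\<integral>\<omega>. (if R < \<bar>X 1 \<omega>\<bar> \<and> \<bar>X 1 \<omega>\<bar> \<le> R*2^N then \<bar>X 1 \<omega>\<bar> else 0) \<partial>M)
        \<le> K * R powr (1 - \<alpha>)) sequentially"
      by (intro always_eventually allI)
    show "R > 0" using R C by simp
  qed
  thus ?thesis using C(2) by blast
qed

lemma trunc_mean_le_alpha_gt1:
  assumes a: "\<alpha> > 1" and int: "integrable M (X 1)" and mean0: "(\<integral>\<omega>. X 1 \<omega> \<partial>M) = 0"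
  shows "\<exists>K R0. R0 > 0 \<and> (\<forall>R\<ge>R0. \<bar>trunc_mean R\<bar> \<le> K * R powr (1 - \<alpha>))"
proof -
  have "\<bar>trunc_mean R\<bar> \<le> (\<integral>\<omega>. (if R < \<bar>X 1 \<omega>\<bar> then \<bar>X 1 \<omega>\<bar> else 0) \<partial>M)" for R
  proof -
    define u where "u \<omega> = (if R < \<bar>X 1 \<omega>\<bar> then X 1 \<omega> else 0)" for \<omega>
    have ui: "integrable M u"
      unfolding u_def by (rule Bochner_Integration.integrable_bound[OF int]) auto
    have "(\<integral>\<omega>. X 1 \<omega> \<partial>M) = (\<integral>\<omega>. (if \<bar>X 1 \<omega>\<bar> \<le> R then X 1 \<omega> else 0) + u \<omega> \<partial>M)"
      by (rule Bochner_Integration.integral_cong) (auto simp: u_def)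
    also have "\<dots> = trunc_mean R + (\<integral>\<omega>. u \<omega> \<partial>M)" unfolding trunc_mean_def
      by (intro Bochner_Integration.integral_add ui integrable_if_bounded[where B="\<bar>R\<bar>"]) auto
    finally have "\<bar>trunc_mean R\<bar> = \<bar>\<integral>\<omega>. u \<omega> \<partial>M\<bar>" using mean0 by simp
    also have "\<dots> \<le> (\<integral>\<omega>. (if R < \<bar>X 1 \<omega>\<bar> then \<bar>X 1 \<omega>\<bar> else 0) \<partial>M)"
      using int by (intro abs_integral_le_integral ui Bochner_Integration.integrable_bound[OF int]) (auto simp: u_def)
    finally show ?thesis .
  qed
  moreover obtain K R0 where "R0 > 0" "\<forall>R\<ge>R0. (\<integral>\<omega>. (if R < \<bar>X 1 \<omega>\<bar> then \<bar>X 1 \<omega>\<bar> else 0) \<partial>M) \<le> K * R powr (1 - \<alpha>)"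
    using integral_abs_gt_le[OF a int] by blast
  ultimately show ?thesis by (meson order_trans)
qed

lemma set_integral_distr_open_interval:
  "(LINT x:{-R<..<R}|distr M borel (X 1). x) = (\<integral>\<omega>. (if \<bar>X 1 \<omega>\<bar> < R then X 1 \<omega> else 0) \<partial>M)"
proof -
  have "(LINT x:{-R<..<R}|distr M borel (X 1). x) = (\<integral>x. indicator {-R<..<R} x *\<^sub>R x \<partial>distr M borel (X 1))"
    by (simp add: set_lebesgue_integral_def)
  also have "\<dots> = (\<integral>\<omega>. indicator {-R<..<R} (X 1 \<omega>) *\<^sub>R X 1 \<omega> \<partial>M)"
    by (rule integral_distr) auto
  also have "\<dots> = (\<integral>\<omega>. (if \<bar>X 1 \<omega>\<bar> < R then X 1 \<omega> else 0) \<partial>M)"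
    by (rule Bochner_Integration.integral_cong) (auto simp: indicator_def abs_less_iff)
  finally show ?thesis .
qed

lemma trunc_mean_le_alpha_eq1:
  assumes a: "\<alpha> = 1"
    and lim: "((\<lambda>R. LINT x:{-R<..<R}|distr M borel (X 1). x) \<longlongrightarrow> \<gamma>0) at_top"
  shows "\<exists>K R0. R0 > 0 \<and> (\<forall>R\<ge>R0. \<bar>trunc_mean R\<bar> \<le> K * R powr (1 - \<alpha>))"
proof -
  define L where "L R = (\<integral>\<omega>. (if \<bar>X 1 \<omega>\<bar> < R then X 1 \<omega> else 0) \<partial>M)" for R
  obtain R1 where R1: "\<And>R. R \<ge> R1 \<Longrightarrow> \<bar>L R - \<gamma>0\<bar> < 1"
    using tendstoD[OF lim, of 1] unfolding set_integral_distr_open_interval L_def[symmetric]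
    by (auto simp: eventually_at_top_linorder dist_real_def)
  obtain C t0 where C: "C > 0" "t0 > 0" "\<And>t. t \<ge> t0 \<Longrightarrow> abs_tail t \<le> C * t powr (-\<alpha>)"
    using abs_tail_le_powr by blast
  have "\<bar>trunc_mean R\<bar> \<le> (\<bar>\<gamma>0\<bar> + 1 + 2 * C) * R powr (1 - \<alpha>)" if R: "R \<ge> max R1 (2 * t0)" for R
  proof -
    have R0: "R > 0" using R C by simp
    have "trunc_mean R - L R = (\<integral>\<omega>. (if \<bar>X 1 \<omega>\<bar> \<le> R then X 1 \<omega> else 0) - (if \<bar>X 1 \<omega>\<bar> < R then X 1 \<omega> else 0) \<partial>M)"
      unfolding trunc_mean_def L_def
      by (intro Bochner_Integration.integral_diff[symmetric] integrable_if_bounded[where B="\<bar>R\<bar>"]) auto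
    also have "\<bar>\<dots>\<bar> \<le> (\<integral>\<omega>. R * (if R/2 < \<bar>X 1 \<omega>\<bar> then 1 else 0) \<partial>M)"
      using R0 by (intro abs_integral_le_integral integrable_scaled_indicator_abs_gt Bochner_Integration.integrable_diff
          integrable_if_bounded[where B="\<bar>R\<bar>"]) auto
    also have "\<dots> = R * abs_tail (R/2)"
      by (simp only: integral_mult_right_zero integral_indicator_abs_gt)
    also have "\<dots> \<le> R * (C * (R/2) powr (-\<alpha>))"
      using R R0 by (intro mult_left_mono C(3)) auto
    also have "\<dots> = 2 * C" using R0 a by (simp add: powr_minus field_simps)
    finally have "\<bar>trunc_mean R - L R\<bar> \<le> 2 * C" .
    moreover have "\<bar>L R\<bar> \<le> \<bar>\<gamma>0\<bar> + 1" using R1[of R] R by linarith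
    ultimately show ?thesis using a R0 by simp
  qed
  moreover have "max R1 (2 * t0) > 0" using C by simp
  ultimately show ?thesis by blast
qed

lemma trunc_mean_le:
  assumes "\<alpha> = 1 \<Longrightarrow> ((\<lambda>R. LINT x:{-R<..<R}|distr M borel (X 1). x) \<longlongrightarrow> \<gamma>0) at_top"
    and "\<alpha> > 1 \<Longrightarrow> integrable M (X 1) \<and> (\<integral>\<omega>. X 1 \<omega> \<partial>M) = 0"
  shows "\<exists>K R0. R0 > 0 \<and> (\<forall>R\<ge>R0. \<bar>trunc_mean R\<bar> \<le> K * R powr (1 - \<alpha>))"
  using trunc_mean_le_alpha_lt1 trunc_mean_le_alpha_eq1 trunc_mean_le_alpha_gt1 assms
  by (cases "\<alpha> < 1"; cases "\<alpha> = 1") auto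

lemma integral_exceeds:
  assumes i: "i \<ge> 1" and c: "c \<ge> 0" and T: "T > 0"
  shows "(\<integral>\<omega>. exceeds c T (X i \<omega>) \<partial>M) = (if c > 0 then abs_tail (T/c) else 0)"
proof -
  have "(\<integral>\<omega>. exceeds c T (X i \<omega>) \<partial>M) = (\<integral>\<omega>. exceeds c T (X 1 \<omega>) \<partial>M)" by (rule integral_ident[OF i]) simp
  also have "\<dots> = (if c > 0 then abs_tail (T/c) else 0)"
  proof (cases "c > 0")
    case True
    have "(\<integral>\<omega>. exceeds c T (X 1 \<omega>) \<partial>M) = (\<integral>\<omega>. (if T/c < \<bar>X 1 \<omega>\<bar> then 1 else 0) \<partial>M)"
      by (rule Bochner_Integration.integral_cong) (use True in \<open>auto simp: exceeds_def abs_mult field_simps\<close>)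
    thus ?thesis using True by (simp only: integral_indicator_abs_gt if_True)
  next
    case False
    hence "c = 0" using c by simp
    thus ?thesis using T by (simp add: exceeds_def)
  qed
  finally show ?thesis .
qed

lemma integral_truncated:
  assumes i: "i \<ge> 1" and c: "c \<ge> 0" and T: "T > 0"
  shows "(\<integral>\<omega>. truncated c T (X i \<omega>) \<partial>M) = (if c > 0 then c * trunc_mean (T/c) else 0)"
proof -
  have "(\<integral>\<omega>. truncated c T (X i \<omega>) \<partial>M) = (\<integral>\<omega>. truncated c T (X 1 \<omega>) \<partial>M)" by (rule integral_ident[OF i]) simp
  also have "\<dots> = (if c > 0 then c * trunc_mean (T/c) else 0)"
  proof (cases "c > 0")
    case True
    have "(\<integral>\<omega>. truncated c T (X 1 \<omega>) \<partial>M) = (\<integral>\<omega>. c * (if \<bar>X 1 \<omega>\<bar> \<le> T/c then X 1 \<omega> else 0) \<partial>M)"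
      by (rule Bochner_Integration.integral_cong) (use True in \<open>auto simp: truncated_def abs_mult field_simps\<close>)
    thus ?thesis using True unfolding trunc_mean_def by simp
  next
    case False
    hence "c = 0" using c by simp
    thus ?thesis using T by (simp add: truncated_def)
  qed
  finally show ?thesis .
qed

lemma integral_truncated_sq:
  assumes i: "i \<ge> 1" and c: "c \<ge> 0" and T: "T > 0"
  shows "(\<integral>\<omega>. (truncated c T (X i \<omega>))\<^sup>2 \<partial>M) = (if c > 0 then c\<^sup>2 * trunc_sq_mean (T/c) else 0)"
proof -
  have "(\<integral>\<omega>. (truncated c T (X i \<omega>))\<^sup>2 \<partial>M) = (\<integral>\<omega>. (truncated c T (X 1 \<omega>))\<^sup>2 \<partial>M)"
    by (rule integral_ident[OF i, where f="\<lambda>y. (truncated c T y)\<^sup>2"]) simp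
  also have "\<dots> = (if c > 0 then c\<^sup>2 * trunc_sq_mean (T/c) else 0)"
  proof (cases "c > 0")
    case True
    have "(\<integral>\<omega>. (truncated c T (X 1 \<omega>))\<^sup>2 \<partial>M) = (\<integral>\<omega>. c\<^sup>2 * (if \<bar>X 1 \<omega>\<bar> \<le> T/c then (X 1 \<omega>)\<^sup>2 else 0) \<partial>M)"
      by (rule Bochner_Integration.integral_cong) (use True in \<open>auto simp: truncated_def abs_mult field_simps power_mult_distrib\<close>)
    thus ?thesis using True unfolding trunc_sq_mean_def by simp
  next
    case False
    hence "c = 0" using c by simp
    thus ?thesis using T by (simp add: truncated_def)
  qed
  finally show ?thesis .
qed

subsection \<open>Tail probability of weighted sums\<close>

definition jump_mass :: "(nat \<Rightarrow> real) \<Rightarrow> nat set \<Rightarrow> real \<Rightarrow> real" where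
  "jump_mass b I t = (\<Sum>j\<in>I. \<integral>\<omega>. exceeds (b j) t (X j \<omega>) \<partial>M)"

definition trunc_moment_sum :: "(nat \<Rightarrow> real) \<Rightarrow> nat set \<Rightarrow> real \<Rightarrow> real" where
  "trunc_moment_sum b I T = (\<Sum>i\<in>I. \<integral>\<omega>. (truncated (b i) T (X i \<omega>))\<^sup>2 \<partial>M)
     + (\<Sum>i\<in>I. \<bar>\<integral>\<omega>. truncated (b i) T (X i \<omega>) \<partial>M\<bar>)\<^sup>2"

lemma jump_mass_nonneg: "0 \<le> jump_mass b I t"
  unfolding jump_mass_def by (intro sum_nonneg Bochner_Integration.integral_nonneg exceeds_nonneg)

lemma trunc_moment_sum_mono:
  assumes "finite I" "J \<subseteq> I"
  shows "trunc_moment_sum b J T \<le> trunc_moment_sum b I T"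
proof -
  have "(\<Sum>i\<in>J. \<bar>\<integral>\<omega>. truncated (b i) T (X i \<omega>) \<partial>M\<bar>) \<le> (\<Sum>i\<in>I. \<bar>\<integral>\<omega>. truncated (b i) T (X i \<omega>) \<partial>M\<bar>)"
    using assms by (intro sum_mono2) auto
  hence "(\<Sum>i\<in>J. \<bar>\<integral>\<omega>. truncated (b i) T (X i \<omega>) \<partial>M\<bar>)\<^sup>2 \<le> (\<Sum>i\<in>I. \<bar>\<integral>\<omega>. truncated (b i) T (X i \<omega>) \<partial>M\<bar>)\<^sup>2"
    by (intro power_mono) (auto intro: sum_nonneg)
  moreover have "(\<Sum>i\<in>J. \<integral>\<omega>. (truncated (b i) T (X i \<omega>))\<^sup>2 \<partial>M) \<le> (\<Sum>i\<in>I. \<integral>\<omega>. (truncated (b i) T (X i \<omega>))\<^sup>2 \<partial>M)"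
    using assms by (intro sum_mono2 Bochner_Integration.integral_nonneg) auto
  ultimately show ?thesis unfolding trunc_moment_sum_def by linarith
qed

lemma jump_mass_eq:
  assumes sub: "I \<subseteq> {1..}" and bnn: "\<And>i. i \<in> I \<Longrightarrow> b i \<ge> 0" and t: "t > 0"
  shows "jump_mass b I t = (\<Sum>j\<in>I. if b j > 0 then abs_tail (t / b j) else 0)"
  unfolding jump_mass_def using sub by (intro sum.cong refl integral_exceeds bnn t) auto

lemma integrable_exceeds_mult_sum_sq:
  assumes T: "T \<ge> 0"
  shows "integrable M (\<lambda>\<omega>. exceeds c t (X j \<omega>) * (\<Sum>i\<in>A. truncated (b i) T (X i \<omega>))\<^sup>2)"
proof (rule integrable_if_bounded[where B="(real (card A) * T)\<^sup>2"])
  fix \<omega>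
  show "\<bar>exceeds c t (X j \<omega>) * (\<Sum>i\<in>A. truncated (b i) T (X i \<omega>))\<^sup>2\<bar> \<le> (real (card A) * T)\<^sup>2"
    using sum_truncated_sq_le[OF T, where A=A and b=b and u="\<lambda>i. X i \<omega>"] by (simp add: abs_mult exceeds_def)
qed simp

lemma integrable_jump_terms:
  assumes T: "T \<ge> 0"
  shows "integrable M (\<lambda>\<omega>. (\<Sum>i\<in>I. truncated (b i) T (X i \<omega>))\<^sup>2)"
    and "integrable M (\<lambda>\<omega>. \<Sum>j\<in>I. \<Sum>k\<in>I-{j}. exceeds (b j) T (X j \<omega>) * exceeds (b k) T (X k \<omega>))"
    and "integrable M (\<lambda>\<omega>. \<Sum>j\<in>I. exceeds (b j) t (X j \<omega>))"
    and "integrable M (\<lambda>\<omega>. \<Sum>j\<in>I. exceeds (b j) T (X j \<omega>) * (\<Sum>i\<in>I-{j}. truncated (b i) T (X i \<omega>))\<^sup>2)"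
proof -
  have ex: "\<bar>exceeds c s y\<bar> \<le> 1" for c s y by (simp add: exceeds_def)
  show "integrable M (\<lambda>\<omega>. (\<Sum>i\<in>I. truncated (b i) T (X i \<omega>))\<^sup>2)"
    by (rule integrable_if_bounded[where B="(real (card I) * T)\<^sup>2"]) (use sum_truncated_sq_le T in auto)
  show "integrable M (\<lambda>\<omega>. \<Sum>j\<in>I. \<Sum>k\<in>I-{j}. exceeds (b j) T (X j \<omega>) * exceeds (b k) T (X k \<omega>))"
    by (intro Bochner_Integration.integrable_sum integrable_if_bounded[where B=1])
      (auto simp: abs_mult intro: mult_le_one ex)
  show "integrable M (\<lambda>\<omega>. \<Sum>j\<in>I. exceeds (b j) t (X j \<omega>))"
    by (intro Bochner_Integration.integrable_sum integrable_if_bounded[where B=1]) (auto intro: ex)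
  show "integrable M (\<lambda>\<omega>. \<Sum>j\<in>I. exceeds (b j) T (X j \<omega>) * (\<Sum>i\<in>I-{j}. truncated (b i) T (X i \<omega>))\<^sup>2)"
    by (intro Bochner_Integration.integrable_sum integrable_exceeds_mult_sum_sq T)
qed

lemma integral_sum_truncated_sq_le:
  assumes fin: "finite I" and sub: "I \<subseteq> {1..}" and T: "T > 0"
  shows "(\<integral>\<omega>. (\<Sum>i\<in>I. truncated (b i) T (X i \<omega>))\<^sup>2 \<partial>M) \<le> trunc_moment_sum b I T"
proof -
  obtain m where m: "m \<in> {1..} - I"
    using infinite_imp_nonempty[OF Diff_infinite_finite[OF fin infinite_Ici[of "1::nat"]]] by blast
  have "(\<integral>\<omega>. (\<lambda>_. 1::real) (X m \<omega>) * (\<Sum>i\<in>I. truncated (b i) T (X i \<omega>))\<^sup>2 \<partial>M)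
      \<le> (\<integral>\<omega>. (\<lambda>_. 1::real) (X m \<omega>) \<partial>M) * trunc_moment_sum b I T"
    unfolding trunc_moment_sum_def
    by (rule integral_mult_sum_sq_le[where Bg=1 and B=T]) (use fin sub m T in \<open>auto intro: abs_truncated_le\<close>)
  thus ?thesis by (simp add: prob_space)
qed

lemma integral_two_jumps_le:
  assumes fin: "finite I" and sub: "I \<subseteq> {1..}"
  shows "(\<integral>\<omega>. (\<Sum>j\<in>I. \<Sum>k\<in>I-{j}. exceeds (b j) T (X j \<omega>) * exceeds (b k) T (X k \<omega>)) \<partial>M)
    \<le> (jump_mass b I T)\<^sup>2"
proof -
  define PJ where "PJ j = (\<integral>\<omega>. exceeds (b j) T (X j \<omega>) \<partial>M)" for j
  have PJ0: "PJ j \<ge> 0" for j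
    unfolding PJ_def by (rule Bochner_Integration.integral_nonneg) (simp add: exceeds_nonneg)
  have "(\<integral>\<omega>. (\<Sum>j\<in>I. \<Sum>k\<in>I-{j}. exceeds (b j) T (X j \<omega>) * exceeds (b k) T (X k \<omega>)) \<partial>M)
      = (\<Sum>j\<in>I. \<Sum>k\<in>I-{j}. (\<integral>\<omega>. exceeds (b j) T (X j \<omega>) * exceeds (b k) T (X k \<omega>) \<partial>M))"
  proof -
    have "integrable M (\<lambda>\<omega>. exceeds (b j) T (X j \<omega>) * exceeds (b k) T (X k \<omega>))" for j k
      by (rule integrable_if_bounded[where B=1]) (auto simp: exceeds_def)
    thus ?thesis by (simp add: Bochner_Integration.integral_sum Bochner_Integration.integrable_sum)
  qed
  also have "\<dots> = (\<Sum>j\<in>I. \<Sum>k\<in>I-{j}. PJ j * PJ k)"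
  proof (intro sum.cong refl)
    fix j k assume j: "j \<in> I" and k: "k \<in> I - {j}"
    have "(\<integral>\<omega>. (\<Prod>l\<in>{j,k}. exceeds (b l) T (X l \<omega>)) \<partial>M) = (\<Prod>l\<in>{j,k}. \<integral>\<omega>. exceeds (b l) T (X l \<omega>) \<partial>M)"
      by (rule integral_prod_indep[where B=1]) (use j k sub in \<open>auto simp: exceeds_def\<close>)
    thus "(\<integral>\<omega>. exceeds (b j) T (X j \<omega>) * exceeds (b k) T (X k \<omega>) \<partial>M) = PJ j * PJ k"
      using k by (simp add: PJ_def)
  qed
  also have "\<dots> \<le> (\<Sum>j\<in>I. \<Sum>k\<in>I. PJ j * PJ k)"
    using fin PJ0 by (intro sum_mono sum_mono2) auto
  also have "\<dots> = (jump_mass b I T)\<^sup>2"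
    by (simp add: jump_mass_def PJ_def power2_eq_square sum_product)
  finally show ?thesis .
qed

lemma integral_jump_rest_le:
  assumes fin: "finite I" and sub: "I \<subseteq> {1..}" and T: "T > 0"
  shows "(\<integral>\<omega>. (\<Sum>j\<in>I. exceeds (b j) T (X j \<omega>) * (\<Sum>i\<in>I-{j}. truncated (b i) T (X i \<omega>))\<^sup>2) \<partial>M)
    \<le> jump_mass b I T * trunc_moment_sum b I T"
proof -
  have "(\<integral>\<omega>. (\<Sum>j\<in>I. exceeds (b j) T (X j \<omega>) * (\<Sum>i\<in>I-{j}. truncated (b i) T (X i \<omega>))\<^sup>2) \<partial>M)
      = (\<Sum>j\<in>I. \<integral>\<omega>. exceeds (b j) T (X j \<omega>) * (\<Sum>i\<in>I-{j}. truncated (b i) T (X i \<omega>))\<^sup>2 \<partial>M)"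
    using T by (intro Bochner_Integration.integral_sum integrable_exceeds_mult_sum_sq) simp
  also have "\<dots> \<le> (\<Sum>j\<in>I. (\<integral>\<omega>. exceeds (b j) T (X j \<omega>) \<partial>M) * trunc_moment_sum b I T)"
  proof (rule sum_mono)
    fix j assume j: "j \<in> I"
    have "(\<integral>\<omega>. exceeds (b j) T (X j \<omega>) * (\<Sum>i\<in>I-{j}. truncated (b i) T (X i \<omega>))\<^sup>2 \<partial>M)
       \<le> (\<integral>\<omega>. exceeds (b j) T (X j \<omega>) \<partial>M) * trunc_moment_sum b (I-{j}) T"
      unfolding trunc_moment_sum_def
      by (rule integral_mult_sum_sq_le[where Bg=1 and B=T])
        (use fin sub j T in \<open>auto simp: exceeds_nonneg exceeds_le_1 intro: abs_truncated_le\<close>)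
    also have "\<dots> \<le> (\<integral>\<omega>. exceeds (b j) T (X j \<omega>) \<partial>M) * trunc_moment_sum b I T"
      using fin by (intro mult_left_mono trunc_moment_sum_mono Bochner_Integration.integral_nonneg exceeds_nonneg) auto
    finally show "(\<integral>\<omega>. exceeds (b j) T (X j \<omega>) * (\<Sum>i\<in>I-{j}. truncated (b i) T (X i \<omega>))\<^sup>2 \<partial>M)
       \<le> (\<integral>\<omega>. exceeds (b j) T (X j \<omega>) \<partial>M) * trunc_moment_sum b I T" .
  qed
  also have "\<dots> = jump_mass b I T * trunc_moment_sum b I T"
    by (simp add: jump_mass_def sum_distrib_right)
  finally show ?thesis .
qed

lemma tail_prob_le:
  assumes fin: "finite I" and sub: "I \<subseteq> {1..}" and x: "x > 0" and e: "0 < \<epsilon>" "\<epsilon> < 1" and T: "T > 0"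
  shows "prob {\<omega> \<in> space M. x < \<bar>\<Sum>i\<in>I. b i * X i \<omega>\<bar>}
     \<le> trunc_moment_sum b I T / x\<^sup>2 + (jump_mass b I T)\<^sup>2 + jump_mass b I ((1-\<epsilon>)*x)
       + jump_mass b I T * trunc_moment_sum b I T / (\<epsilon>*x)\<^sup>2"
proof -
  define Z where "Z \<omega> = (\<Sum>i\<in>I. truncated (b i) T (X i \<omega>))\<^sup>2" for \<omega>
  define D where "D \<omega> = (\<Sum>j\<in>I. \<Sum>k\<in>I-{j}. exceeds (b j) T (X j \<omega>) * exceeds (b k) T (X k \<omega>))" for \<omega>
  define A where "A \<omega> = (\<Sum>j\<in>I. exceeds (b j) ((1-\<epsilon>)*x) (X j \<omega>))" for \<omega>
  define W where "W \<omega> = (\<Sum>j\<in>I. exceeds (b j) T (X j \<omega>) * (\<Sum>i\<in>I-{j}. truncated (b i) T (X i \<omega>))\<^sup>2)" for \<omega>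
  note integrable = integrable_jump_terms[OF less_imp_le[OF T], where b=b and I=I, folded Z_def D_def W_def]
    integrable_jump_terms(3)[OF less_imp_le[OF T], where b=b and I=I and t="(1-\<epsilon>)*x", folded A_def]
  have "prob {\<omega> \<in> space M. x < \<bar>\<Sum>i\<in>I. b i * X i \<omega>\<bar>}
      \<le> (\<integral>\<omega>. Z \<omega> / x\<^sup>2 + D \<omega> + A \<omega> + W \<omega> / (\<epsilon>*x)\<^sup>2 \<partial>M)"
  proof (rule prob_le_integral)
    show "{\<omega> \<in> space M. x < \<bar>\<Sum>i\<in>I. b i * X i \<omega>\<bar>} \<in> events" by measurable
    fix \<omega> assume "\<omega> \<in> space M"
    hence "indicator {\<omega> \<in> space M. x < \<bar>\<Sum>i\<in>I. b i * X i \<omega>\<bar>} \<omega> = (if x < \<bar>\<Sum>i\<in>I. b i * X i \<omega>\<bar> then 1 else 0)"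
      by (simp add: indicator_def)
    also have "\<dots> \<le> Z \<omega> / x\<^sup>2 + D \<omega> + A \<omega> + W \<omega> / (\<epsilon>*x)\<^sup>2"
      using indicator_abs_sum_gt_le[OF fin x e, where b=b and u="\<lambda>i. X i \<omega>" and T=T]
      by (simp add: Z_def D_def A_def W_def sum_divide_distrib)
    finally show "indicator {\<omega> \<in> space M. x < \<bar>\<Sum>i\<in>I. b i * X i \<omega>\<bar>} \<omega> \<le> Z \<omega> / x\<^sup>2 + D \<omega> + A \<omega> + W \<omega> / (\<epsilon>*x)\<^sup>2" .
  qed (use integrable in auto)
  also have "\<dots> = (\<integral>\<omega>. Z \<omega> \<partial>M) / x\<^sup>2 + (\<integral>\<omega>. D \<omega> \<partial>M) + (\<integral>\<omega>. A \<omega> \<partial>M) + (\<integral>\<omega>. W \<omega> \<partial>M) / (\<epsilon>*x)\<^sup>2"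
    using integrable by simp
  also have "\<dots> \<le> trunc_moment_sum b I T / x\<^sup>2 + (jump_mass b I T)\<^sup>2 + jump_mass b I ((1-\<epsilon>)*x)
       + jump_mass b I T * trunc_moment_sum b I T / (\<epsilon>*x)\<^sup>2"
  proof -
    have "(\<integral>\<omega>. A \<omega> \<partial>M) = jump_mass b I ((1-\<epsilon>)*x)"
      unfolding A_def jump_mass_def by (intro Bochner_Integration.integral_sum integrable_if_bounded[where B=1])
        (auto simp: exceeds_def)
    thus ?thesis
      using integral_sum_truncated_sq_le[OF fin sub T, of b] integral_two_jumps_le[OF fin sub, of b T]
        integral_jump_rest_le[OF fin sub T, of b]
      unfolding Z_def D_def W_def by (intro add_mono divide_right_mono) auto
  qed
  finally show ?thesis .
qed

lemma tail_prob_ge: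
  assumes fin: "finite I" and sub: "I \<subseteq> {1..}" and x: "x > 0" and e: "0 < \<epsilon>" and T: "T > 0"
    and T_le: "T \<le> (1+\<epsilon>)*x"
  shows "jump_mass b I ((1+\<epsilon>)*x) - (jump_mass b I T)\<^sup>2 - jump_mass b I T * trunc_moment_sum b I T / (\<epsilon>*x)\<^sup>2
     \<le> prob {\<omega> \<in> space M. x < \<bar>\<Sum>i\<in>I. b i * X i \<omega>\<bar>}"
proof -
  define D where "D \<omega> = (\<Sum>j\<in>I. \<Sum>k\<in>I-{j}. exceeds (b j) T (X j \<omega>) * exceeds (b k) T (X k \<omega>))" for \<omega>
  define A where "A \<omega> = (\<Sum>j\<in>I. exceeds (b j) ((1+\<epsilon>)*x) (X j \<omega>))" for \<omega>
  define W where "W \<omega> = (\<Sum>j\<in>I. exceeds (b j) T (X j \<omega>) * (\<Sum>i\<in>I-{j}. truncated (b i) T (X i \<omega>))\<^sup>2)" for \<omega>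
  note integrable = integrable_jump_terms(2,4)[OF less_imp_le[OF T], where b=b and I=I, folded D_def W_def]
    integrable_jump_terms(3)[OF less_imp_le[OF T], where b=b and I=I and t="(1+\<epsilon>)*x", folded A_def]
  have "jump_mass b I ((1+\<epsilon>)*x) - (jump_mass b I T)\<^sup>2 - jump_mass b I T * trunc_moment_sum b I T / (\<epsilon>*x)\<^sup>2
      \<le> (\<integral>\<omega>. A \<omega> \<partial>M) - (\<integral>\<omega>. D \<omega> \<partial>M) - (\<integral>\<omega>. W \<omega> \<partial>M) / (\<epsilon>*x)\<^sup>2"
  proof -
    have "(\<integral>\<omega>. A \<omega> \<partial>M) = jump_mass b I ((1+\<epsilon>)*x)"
      unfolding A_def jump_mass_def by (intro Bochner_Integration.integral_sum integrable_if_bounded[where B=1])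
        (auto simp: exceeds_def)
    thus ?thesis
      using integral_two_jumps_le[OF fin sub, of b T] integral_jump_rest_le[OF fin sub T, of b]
      unfolding D_def W_def by (intro diff_mono divide_right_mono) auto
  qed
  also have "\<dots> = (\<integral>\<omega>. A \<omega> - D \<omega> - W \<omega> / (\<epsilon>*x)\<^sup>2 \<partial>M)"
    using integrable by simp
  also have "\<dots> \<le> prob {\<omega> \<in> space M. x < \<bar>\<Sum>i\<in>I. b i * X i \<omega>\<bar>}"
  proof (rule integral_le_prob)
    show "{\<omega> \<in> space M. x < \<bar>\<Sum>i\<in>I. b i * X i \<omega>\<bar>} \<in> events" by measurable
    fix \<omega> assume \<omega>: "\<omega> \<in> space M"
    have "A \<omega> - D \<omega> - W \<omega> / (\<epsilon>*x)\<^sup>2 \<le> (if x < \<bar>\<Sum>i\<in>I. b i * X i \<omega>\<bar> then 1 else 0)"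
      using indicator_abs_sum_gt_ge[OF fin x e T_le, where b=b and u="\<lambda>i. X i \<omega>"]
      by (simp add: D_def A_def W_def sum_divide_distrib)
    also have "\<dots> = indicator {\<omega> \<in> space M. x < \<bar>\<Sum>i\<in>I. b i * X i \<omega>\<bar>} \<omega>"
      using \<omega> by (simp add: indicator_def)
    finally show "A \<omega> - D \<omega> - W \<omega> / (\<epsilon>*x)\<^sup>2 \<le> indicator {\<omega> \<in> space M. x < \<bar>\<Sum>i\<in>I. b i * X i \<omega>\<bar>} \<omega>" .
  qed (use integrable in auto)
  finally show ?thesis .
qed

lemma integral_truncated_sq_le:
  assumes i: "i \<ge> 1" and c: "c > 0" and T: "T > 0" and big: "T / c \<ge> R0"
    and K2: "\<And>R. R \<ge> R0 \<Longrightarrow> trunc_sq_mean R \<le> K2 * R powr (2-\<alpha>)"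
  shows "(\<integral>\<omega>. (truncated c T (X i \<omega>))\<^sup>2 \<partial>M) \<le> K2 * T powr (2-\<alpha>) * c powr \<alpha>"
proof -
  have "(\<integral>\<omega>. (truncated c T (X i \<omega>))\<^sup>2 \<partial>M) = c powr 2 * trunc_sq_mean (T / c)"
    using integral_truncated_sq[OF i _ T, of c] c by simp
  also have "\<dots> \<le> c powr 2 * (K2 * (T / c) powr (2-\<alpha>))"
    using K2[OF big] by (intro mult_left_mono) simp_all
  also have "\<dots> = K2 * (c powr 2 * (T / c) powr (2-\<alpha>))" by (simp only: mult_ac)
  finally show ?thesis using powr_mult_div_powr[OF c T, of 2 \<alpha>] by simp
qed

lemma abs_integral_truncated_le:
  assumes i: "i \<ge> 1" and c: "c > 0" and T: "T > 0" and big: "T / c \<ge> R0"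
    and K1: "\<And>R. R \<ge> R0 \<Longrightarrow> \<bar>trunc_mean R\<bar> \<le> K1 * R powr (1-\<alpha>)"
  shows "\<bar>\<integral>\<omega>. truncated c T (X i \<omega>) \<partial>M\<bar> \<le> K1 * T powr (1-\<alpha>) * c powr \<alpha>"
proof -
  have "\<bar>\<integral>\<omega>. truncated c T (X i \<omega>) \<partial>M\<bar> = c powr 1 * \<bar>trunc_mean (T / c)\<bar>"
    using integral_truncated[OF i _ T, of c] c by (simp add: abs_mult)
  also have "\<dots> \<le> c powr 1 * (K1 * (T / c) powr (1-\<alpha>))"
    using K1[OF big] by (intro mult_left_mono) simp_all
  also have "\<dots> = K1 * (c powr 1 * (T / c) powr (1-\<alpha>))" by (simp only: mult_ac)
  finally show ?thesis using powr_mult_div_powr[OF c T, of 1 \<alpha>] by simp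
qed

lemma trunc_moment_sum_le:
  assumes sub: "I \<subseteq> {1..}" and bnn: "\<And>i. i \<in> I \<Longrightarrow> b i \<ge> 0" and T: "T > 0"
    and K1: "\<And>R. R \<ge> R0 \<Longrightarrow> \<bar>trunc_mean R\<bar> \<le> K1 * R powr (1-\<alpha>)"
    and K2: "\<And>R. R \<ge> R0 \<Longrightarrow> trunc_sq_mean R \<le> K2 * R powr (2-\<alpha>)"
    and big: "\<And>i. i \<in> I \<Longrightarrow> b i > 0 \<Longrightarrow> T / b i \<ge> R0"
  shows "trunc_moment_sum b I T
    \<le> K2 * T powr (2-\<alpha>) * (\<Sum>i\<in>I. b i powr \<alpha>) + (K1 * T powr (1-\<alpha>) * (\<Sum>i\<in>I. b i powr \<alpha>))\<^sup>2"
proof -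
  have zero: "b i = 0" if "i \<in> I" "\<not> b i > 0" for i using bnn that by force
  have "(\<Sum>i\<in>I. \<integral>\<omega>. (truncated (b i) T (X i \<omega>))\<^sup>2 \<partial>M) \<le> (\<Sum>i\<in>I. K2 * T powr (2-\<alpha>) * b i powr \<alpha>)"
  proof (rule sum_mono)
    fix i assume i: "i \<in> I"
    show "(\<integral>\<omega>. (truncated (b i) T (X i \<omega>))\<^sup>2 \<partial>M) \<le> K2 * T powr (2-\<alpha>) * b i powr \<alpha>"
      using integral_truncated_sq_le[OF _ _ T big[OF i] K2] i sub zero[OF i] T
      by (cases "b i > 0") (auto simp: truncated_def)
  qed
  moreover have "(\<Sum>i\<in>I. \<bar>\<integral>\<omega>. truncated (b i) T (X i \<omega>) \<partial>M\<bar>) \<le> (\<Sum>i\<in>I. K1 * T powr (1-\<alpha>) * b i powr \<alpha>)"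
  proof (rule sum_mono)
    fix i assume i: "i \<in> I"
    show "\<bar>\<integral>\<omega>. truncated (b i) T (X i \<omega>) \<partial>M\<bar> \<le> K1 * T powr (1-\<alpha>) * b i powr \<alpha>"
      using abs_integral_truncated_le[OF _ _ T big[OF i] K1] i sub zero[OF i] T
      by (cases "b i > 0") (auto simp: truncated_def)
  qed
  hence "(\<Sum>i\<in>I. \<bar>\<integral>\<omega>. truncated (b i) T (X i \<omega>) \<partial>M\<bar>)\<^sup>2 \<le> (\<Sum>i\<in>I. K1 * T powr (1-\<alpha>) * b i powr \<alpha>)\<^sup>2"
    by (intro power_mono) (auto intro: sum_nonneg)
  ultimately show ?thesis unfolding trunc_moment_sum_def by (simp add: sum_distrib_left)
qed

lemma scaled_tail_prob_bounds:
  fixes b :: "nat \<Rightarrow> real"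
  assumes fin: "finite I" and sub: "I \<subseteq> {1..}" and bnn: "\<And>i. i \<in> I \<Longrightarrow> b i \<ge> 0"
    and x: "x > 0" and e: "0 < \<epsilon>" "\<epsilon> < 1" and d: "0 < \<delta>" "\<delta> \<le> 1"
    and K1: "\<And>R. R \<ge> R0 \<Longrightarrow> \<bar>trunc_mean R\<bar> \<le> K1 * R powr (1-\<alpha>)"
    and K2: "\<And>R. R \<ge> R0 \<Longrightarrow> trunc_sq_mean R \<le> K2 * R powr (2-\<alpha>)"
    and big: "\<And>i. i \<in> I \<Longrightarrow> b i > 0 \<Longrightarrow> \<delta> * x / b i \<ge> R0"
  defines "J \<equiv> \<lambda>a. x powr \<alpha> * jump_mass b I (a * x)"
    and "s \<equiv> \<Sum>i\<in>I. b i powr \<alpha>"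
  defines "u \<equiv> K2 * \<delta> powr (2-\<alpha>) * s + K1\<^sup>2 * \<delta> powr (2-2*\<alpha>) * s\<^sup>2 * x powr (-\<alpha>)"
  shows "x powr \<alpha> * prob {\<omega> \<in> space M. x < \<bar>\<Sum>i\<in>I. b i * X i \<omega>\<bar>}
      \<le> u + (J \<delta>)\<^sup>2 * x powr (-\<alpha>) + J (1-\<epsilon>) + J \<delta> * u * x powr (-\<alpha>) / \<epsilon>\<^sup>2"
    and "J (1+\<epsilon>) - (J \<delta>)\<^sup>2 * x powr (-\<alpha>) - J \<delta> * u * x powr (-\<alpha>) / \<epsilon>\<^sup>2
      \<le> x powr \<alpha> * prob {\<omega> \<in> space M. x < \<bar>\<Sum>i\<in>I. b i * X i \<omega>\<bar>}"
proof -
  define T where "T = \<delta> * x"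
  define V where "V = trunc_moment_sum b I T"
  define m where "m = jump_mass b I T"
  have T: "T > 0" using d x by (simp add: T_def)
  have inv: "x powr \<alpha> * x powr (-\<alpha>) = 1" using x by (simp add: powr_minus)
  have "V \<le> K2 * T powr (2-\<alpha>) * s + (K1 * T powr (1-\<alpha>) * s)\<^sup>2"
    unfolding V_def s_def using big by (intro trunc_moment_sum_le[OF sub bnn T K1 K2]) (auto simp: T_def)
  hence "x powr \<alpha> * V / x\<^sup>2 \<le> x powr \<alpha> * (K2 * T powr (2-\<alpha>) * s + (K1 * T powr (1-\<alpha>) * s)\<^sup>2) / x\<^sup>2"
    by (intro divide_right_mono mult_left_mono) auto
  also have "\<dots> = u" unfolding u_def T_def by (rule scaled_moment_bound_eq[OF x d(1)])
  finally have Vu: "x powr \<alpha> * V / x\<^sup>2 \<le> u" .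
  have T_le: "T \<le> (1+\<epsilon>)*x" unfolding T_def using d e x by (intro mult_right_mono) auto
  have m: "0 \<le> m" "J \<delta> = x powr \<alpha> * m" by (simp_all add: m_def jump_mass_nonneg J_def T_def mult.commute)
  have sq: "x powr \<alpha> * m\<^sup>2 = (J \<delta>)\<^sup>2 * x powr (-\<alpha>)"
  proof -
    have "(J \<delta>)\<^sup>2 * x powr (-\<alpha>) = x powr \<alpha> * m\<^sup>2 * (x powr \<alpha> * x powr (-\<alpha>))"
      by (simp add: m power2_eq_square mult_ac)
    thus ?thesis using inv by simp
  qed
  have cross: "x powr \<alpha> * (m * V / (\<epsilon>*x)\<^sup>2) = J \<delta> * (x powr \<alpha> * V / x\<^sup>2) * x powr (-\<alpha>) / \<epsilon>\<^sup>2"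
  proof -
    have "J \<delta> * (x powr \<alpha> * V / x\<^sup>2) * x powr (-\<alpha>) / \<epsilon>\<^sup>2
        = x powr \<alpha> * (m * V / (\<epsilon>*x)\<^sup>2) * (x powr \<alpha> * x powr (-\<alpha>))"
      by (simp add: m power_mult_distrib mult_ac)
    thus ?thesis using inv by simp
  qed
  have cross_le: "J \<delta> * (x powr \<alpha> * V / x\<^sup>2) * x powr (-\<alpha>) / \<epsilon>\<^sup>2 \<le> J \<delta> * u * x powr (-\<alpha>) / \<epsilon>\<^sup>2"
    using Vu m by (intro divide_right_mono mult_right_mono mult_left_mono) auto
  have "x powr \<alpha> * prob {\<omega> \<in> space M. x < \<bar>\<Sum>i\<in>I. b i * X i \<omega>\<bar>}
      \<le> x powr \<alpha> * (V / x\<^sup>2 + m\<^sup>2 + jump_mass b I ((1-\<epsilon>)*x) + m * V / (\<epsilon>*x)\<^sup>2)"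
    using tail_prob_le[OF fin sub x e T, of b] unfolding V_def m_def by (intro mult_left_mono) auto
  also have "\<dots> = x powr \<alpha> * V / x\<^sup>2 + (J \<delta>)\<^sup>2 * x powr (-\<alpha>) + J (1-\<epsilon>)
      + J \<delta> * (x powr \<alpha> * V / x\<^sup>2) * x powr (-\<alpha>) / \<epsilon>\<^sup>2"
    by (simp only: distrib_left sq cross) (simp add: J_def)
  finally show "x powr \<alpha> * prob {\<omega> \<in> space M. x < \<bar>\<Sum>i\<in>I. b i * X i \<omega>\<bar>}
      \<le> u + (J \<delta>)\<^sup>2 * x powr (-\<alpha>) + J (1-\<epsilon>) + J \<delta> * u * x powr (-\<alpha>) / \<epsilon>\<^sup>2"
    using Vu cross_le by linarith
  have "J (1+\<epsilon>) - (J \<delta>)\<^sup>2 * x powr (-\<alpha>) - J \<delta> * u * x powr (-\<alpha>) / \<epsilon>\<^sup>2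
      \<le> J (1+\<epsilon>) - (J \<delta>)\<^sup>2 * x powr (-\<alpha>) - J \<delta> * (x powr \<alpha> * V / x\<^sup>2) * x powr (-\<alpha>) / \<epsilon>\<^sup>2"
    using cross_le by linarith
  also have "\<dots> = x powr \<alpha> * (jump_mass b I ((1+\<epsilon>)*x) - m\<^sup>2 - m * V / (\<epsilon>*x)\<^sup>2)"
    by (simp only: right_diff_distrib sq cross) (simp add: J_def)
  also have "\<dots> \<le> x powr \<alpha> * prob {\<omega> \<in> space M. x < \<bar>\<Sum>i\<in>I. b i * X i \<omega>\<bar>}"
    using tail_prob_ge[OF fin sub x e(1) T T_le, of b] unfolding V_def m_def by (intro mult_left_mono) auto
  finally show "J (1+\<epsilon>) - (J \<delta>)\<^sup>2 * x powr (-\<alpha>) - J \<delta> * u * x powr (-\<alpha>) / \<epsilon>\<^sup>2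
      \<le> x powr \<alpha> * prob {\<omega> \<in> space M. x < \<bar>\<Sum>i\<in>I. b i * X i \<omega>\<bar>}" .
qed

lemma scaled_tail_prob_tendsto:
  fixes b :: "nat \<Rightarrow> nat \<Rightarrow> real" and xs :: "nat \<Rightarrow> real" and \<gamma>0 :: real
  assumes mean_eq1: "\<alpha> = 1 \<Longrightarrow> ((\<lambda>R. LINT x:{-R<..<R}|distr M borel (X 1). x) \<longlongrightarrow> \<gamma>0) at_top"
    and mean_gt1: "\<alpha> > 1 \<Longrightarrow> integrable M (X 1) \<and> (\<integral>\<omega>. X 1 \<omega> \<partial>M) = 0"
    and b_nonneg: "\<And>j n. 1 \<le> j \<Longrightarrow> j \<le> n \<Longrightarrow> b j n \<ge> 0"
    and b_max: "(\<lambda>n. Max ((\<lambda>j. b j n) ` {1..n})) \<longlonglongrightarrow> 0"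
    and b_sum: "(\<lambda>n. \<Sum>j=1..n. b j n powr \<alpha>) \<longlonglongrightarrow> 1"
    and xs_lim: "filterlim xs at_top sequentially"
  shows "(\<lambda>n. xs n powr \<alpha> * prob {\<omega> \<in> space M. \<bar>\<Sum>j=1..n. b j n * X j \<omega>\<bar> > xs n}) \<longlonglongrightarrow> c0p + c0m"
proof (rule tendstoI)
  fix \<eta> :: real assume \<eta>: "\<eta> > 0"
  define c0 where "c0 = c0p + c0m"
  obtain K1 R1 where R1: "R1 > 0" and K1: "\<And>R. R \<ge> R1 \<Longrightarrow> \<bar>trunc_mean R\<bar> \<le> K1 * R powr (1-\<alpha>)"
    using trunc_mean_le[OF mean_eq1 mean_gt1] by blast
  obtain K2 R2 where R2: "R2 > 0" and K2: "\<And>R. R \<ge> R2 \<Longrightarrow> trunc_sq_mean R \<le> K2 * R powr (2-\<alpha>)"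
    using trunc_sq_mean_le by blast
  define R0 where "R0 = max R1 R2"
  have R0: "R0 > 0" using R1 by (simp add: R0_def)
  obtain \<epsilon> where \<epsilon>: "0 < \<epsilon>" "\<epsilon> < 1" "c0 * (1 - \<epsilon>) powr (-\<alpha>) < c0 + \<eta>/2"
      "c0 - \<eta> < c0 * (1 + \<epsilon>) powr (-\<alpha>)"
    using exists_eps_powr_close[of "\<eta>/2" c0 \<alpha>] \<eta> by force
  obtain \<delta> where \<delta>: "0 < \<delta>" "\<delta> \<le> 1" "K2 * \<delta> powr (2-\<alpha>) < \<eta>/2"
    using exists_delta_powr_small[of "\<eta>/2" "2-\<alpha>" K2] \<eta> alpha by auto
  define s where "s n = (\<Sum>j=1..n. b j n powr \<alpha>)" for n
  define J where "J a n = xs n powr \<alpha> * (\<Sum>j=1..n. if b j n > 0 then abs_tail (a * xs n / b j n) else 0)" for a n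
  define u where "u n = K2 * \<delta> powr (2-\<alpha>) * s n + K1\<^sup>2 * \<delta> powr (2-2*\<alpha>) * (s n)\<^sup>2 * xs n powr (-\<alpha>)" for n
  have J_lim: "J a \<longlonglongrightarrow> c0 * a powr (-\<alpha>)" if "a > 0" for a
    unfolding J_def[abs_def] c0_def
    by (rule tendsto_weighted_tail_sum[OF abs_tail_asymptotics that b_nonneg b_max b_sum xs_lim])
  have x_lim: "(\<lambda>n. xs n powr (-\<alpha>)) \<longlonglongrightarrow> 0"
    using alpha by (intro tendsto_neg_powr[OF _ xs_lim]) simp
  have s_lim: "s \<longlonglongrightarrow> 1" using b_sum by (simp add: s_def[abs_def])
  have "u \<longlonglongrightarrow> K2 * \<delta> powr (2-\<alpha>) * 1 + K1\<^sup>2 * \<delta> powr (2-2*\<alpha>) * 1\<^sup>2 * 0"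
    unfolding u_def[abs_def] by (intro tendsto_intros s_lim x_lim)
  hence u_lim: "u \<longlonglongrightarrow> K2 * \<delta> powr (2-\<alpha>)" by simp
  have "(\<lambda>n. u n + (J \<delta> n)\<^sup>2 * xs n powr (-\<alpha>) + J (1-\<epsilon>) n + J \<delta> n * u n * xs n powr (-\<alpha>) / \<epsilon>\<^sup>2)
      \<longlonglongrightarrow> K2 * \<delta> powr (2-\<alpha>) + (c0 * \<delta> powr (-\<alpha>))\<^sup>2 * 0 + c0 * (1 - \<epsilon>) powr (-\<alpha>)
        + c0 * \<delta> powr (-\<alpha>) * (K2 * \<delta> powr (2-\<alpha>)) * 0 / \<epsilon>\<^sup>2"
    using \<epsilon> \<delta> by (intro tendsto_intros u_lim J_lim x_lim) auto
  hence upper: "eventually (\<lambda>n. u n + (J \<delta> n)\<^sup>2 * xs n powr (-\<alpha>) + J (1-\<epsilon>) n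
      + J \<delta> n * u n * xs n powr (-\<alpha>) / \<epsilon>\<^sup>2 < c0 + \<eta>) sequentially"
    using \<epsilon> \<delta> by (intro order_tendstoD) auto
  have "(\<lambda>n. J (1+\<epsilon>) n - (J \<delta> n)\<^sup>2 * xs n powr (-\<alpha>) - J \<delta> n * u n * xs n powr (-\<alpha>) / \<epsilon>\<^sup>2)
      \<longlonglongrightarrow> c0 * (1 + \<epsilon>) powr (-\<alpha>) - (c0 * \<delta> powr (-\<alpha>))\<^sup>2 * 0
        - c0 * \<delta> powr (-\<alpha>) * (K2 * \<delta> powr (2-\<alpha>)) * 0 / \<epsilon>\<^sup>2"
    using \<epsilon> \<delta> by (intro tendsto_intros u_lim J_lim x_lim) auto
  hence lower: "eventually (\<lambda>n. c0 - \<eta> < J (1+\<epsilon>) n - (J \<delta> n)\<^sup>2 * xs n powr (-\<alpha>)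
      - J \<delta> n * u n * xs n powr (-\<alpha>) / \<epsilon>\<^sup>2) sequentially"
    using \<epsilon> by (intro order_tendstoD) auto
  have "eventually (\<lambda>n. xs n \<ge> 1) sequentially"
    using xs_lim filterlim_at_top by blast
  moreover have "eventually (\<lambda>n. Max ((\<lambda>j. b j n) ` {1..n}) < \<delta> / R0) sequentially"
    using b_max \<delta> R0 by (intro order_tendstoD(2)) auto
  ultimately show "eventually (\<lambda>n. dist (xs n powr \<alpha> * prob {\<omega> \<in> space M. \<bar>\<Sum>j=1..n. b j n * X j \<omega>\<bar> > xs n})
      (c0p + c0m) < \<eta>) sequentially"
    using upper lower
  proof eventually_elim
    case (elim n)
    have bnn: "\<And>j. j \<in> {1..n} \<Longrightarrow> b j n \<ge> 0" using b_nonneg by auto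
    have big: "\<delta> * xs n / b j n \<ge> R0" if "j \<in> {1..n}" "b j n > 0" for j
    proof -
      have "b j n \<le> Max ((\<lambda>j. b j n) ` {1..n})" using that by (intro Max_ge) auto
      hence "R0 * b j n \<le> R0 * Max ((\<lambda>j. b j n) ` {1..n})" using R0 by (intro mult_left_mono) auto
      also have "\<dots> < \<delta>" using elim R0 by (simp add: field_simps)
      also have "\<delta> \<le> \<delta> * xs n" using elim \<delta> by simp
      finally show ?thesis using that by (simp add: field_simps)
    qed
    have J_eq: "xs n powr \<alpha> * jump_mass (\<lambda>j. b j n) {1..n} (a * xs n) = J a n" if "a > 0" for a
      using elim that by (subst jump_mass_eq) (auto simp: J_def bnn)
    have K1': "\<bar>trunc_mean R\<bar> \<le> K1 * R powr (1-\<alpha>)" and K2': "trunc_sq_mean R \<le> K2 * R powr (2-\<alpha>)"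
      if "R \<ge> R0" for R using K1 K2 that by (auto simp: R0_def)
    have x: "xs n > 0" and sub: "{1..n} \<subseteq> {1..}" and pos: "0 < 1 - \<epsilon>" "0 < 1 + \<epsilon>"
      using elim \<epsilon> by auto
    note bounds = scaled_tail_prob_bounds[where b="\<lambda>j. b j n" and I="{1..n}" and x="xs n",
        OF finite_atLeastAtMost sub bnn x \<epsilon>(1,2) \<delta>(1,2) K1' K2' big,
        unfolded J_eq[OF \<delta>(1)] J_eq[OF pos(1)] J_eq[OF pos(2)]]
    have "J (1+\<epsilon>) n - (J \<delta> n)\<^sup>2 * xs n powr (-\<alpha>) - J \<delta> n * u n * xs n powr (-\<alpha>) / \<epsilon>\<^sup>2
        \<le> xs n powr \<alpha> * prob {\<omega> \<in> space M. \<bar>\<Sum>j=1..n. b j n * X j \<omega>\<bar> > xs n}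
      \<and> xs n powr \<alpha> * prob {\<omega> \<in> space M. \<bar>\<Sum>j=1..n. b j n * X j \<omega>\<bar> > xs n}
        \<le> u n + (J \<delta> n)\<^sup>2 * xs n powr (-\<alpha>) + J (1-\<epsilon>) n + J \<delta> n * u n * xs n powr (-\<alpha>) / \<epsilon>\<^sup>2"
      using bounds unfolding u_def s_def by blast
    thus ?case using elim by (auto simp: dist_real_def c0_def abs_less_iff)
  qed
qed

end

text \<open>The locale asks every \<open>X i\<close> to be measurable, while the hypotheses only concern indices
  \<open>i \<ge> 1\<close>; the unused \<open>X 0\<close> is therefore replaced by \<open>0\<close>.\<close>

lemma iid_power_tails_zero_extension:
  fixes M :: "'a measure" and X :: "nat \<Rightarrow> 'a \<Rightarrow> real"
  assumes P: "prob_space M"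
    and indep: "prob_space.indep_vars M (\<lambda>_. borel) X {1..}"
    and ident: "\<And>j. j \<ge> 1 \<Longrightarrow> distr M borel (X j) = distr M borel (X 1)"
    and alpha: "0 < \<alpha>" "\<alpha> < 2"
    and tail_pos: "((\<lambda>x. x powr \<alpha> * (1 - measure M {\<omega> \<in> space M. X 1 \<omega> \<le> x})) \<longlongrightarrow> c0p) at_top"
    and tail_neg: "((\<lambda>x. \<bar>x\<bar> powr \<alpha> * measure M {\<omega> \<in> space M. X 1 \<omega> \<le> x}) \<longlongrightarrow> c0m) at_bot"
  shows "iid_power_tails M (\<lambda>i. if i = 0 then (\<lambda>_. 0) else X i) \<alpha> c0p c0m"
proof -
  interpret prob_space M by (rule P)
  define Y where "Y i = (if i = 0 then (\<lambda>_. 0) else X i)" for i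
  have Y: "Y i = X i" if "i \<ge> 1" for i using that by (simp add: Y_def)
  have "Y i \<in> borel_measurable M" for i
    using indep unfolding indep_vars_def Y_def by (cases "i = 0") auto
  moreover have "indep_vars (\<lambda>_. borel) Y {1..}"
    using indep by (subst indep_vars_cong[where Y=X and N'="\<lambda>_. borel" and J="{1..}"]) (auto simp: Y)
  moreover have "distr M borel (Y j) = distr M borel (Y 1)" if "j \<ge> 1" for j
    using ident[OF that] that by (simp add: Y)
  ultimately have "iid_seq M Y"
    unfolding iid_seq_def iid_seq_axioms_def using P by blast
  moreover have "iid_power_tails_axioms M Y \<alpha> c0p c0m"
    unfolding iid_power_tails_axioms_def using alpha tail_pos tail_neg by (simp add: Y)
  ultimately show ?thesis by (simp add: iid_power_tails_def Y_def[abs_def])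
qed

theorem corollary4p3:
  fixes M :: "'a measure"
    and X :: "nat \<Rightarrow> 'a \<Rightarrow> real"
    and F0 :: "real \<Rightarrow> real"
    and \<alpha> c0p c0m \<gamma>0 :: real
    and b :: "nat \<Rightarrow> nat \<Rightarrow> real"
    and xs :: "nat \<Rightarrow> real"
  assumes P: "prob_space M"
    and alpha: "0 < \<alpha>" "\<alpha> < 2"
    and indep: "prob_space.indep_vars M (\<lambda>_. borel) X {1..}"
    and ident: "\<And>j. j \<ge> 1 \<Longrightarrow> distr M borel (X j) = distr M borel (X 1)"
    and F0_def: "\<And>x. F0 x = measure M {\<omega> \<in> space M. X 1 \<omega> \<le> x}"
    and tail_pos: "((\<lambda>x. x powr \<alpha> * (1 - F0 x)) \<longlongrightarrow> c0p) at_top"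
    and tail_neg: "((\<lambda>x. \<bar>x\<bar> powr \<alpha> * F0 x) \<longlongrightarrow> c0m) at_bot"
    and c0_pos: "c0p + c0m > 0"
    and alpha1: "\<alpha> = 1 \<Longrightarrow> c0p = c0m \<and>
        ((\<lambda>R. LINT x:{-R<..<R}|distr M borel (X 1). x) \<longlongrightarrow> \<gamma>0) at_top"
    and alpha_gt1: "\<alpha> > 1 \<Longrightarrow> integrable M (X 1) \<and> integral\<^sup>L M (X 1) = 0"
    and b_nonneg: "\<And>j n. 1 \<le> j \<Longrightarrow> j \<le> n \<Longrightarrow> b j n \<ge> 0"
    and b_max: "(\<lambda>n. Max ((\<lambda>j. b j n) ` {1..n})) \<longlonglongrightarrow> 0"
    and b_sum: "(\<lambda>n. \<Sum>j=1..n. b j n powr \<alpha>) \<longlonglongrightarrow> 1"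
    and xs_lim: "filterlim xs at_top sequentially"
  shows "(\<lambda>n. xs n powr \<alpha> *
            measure M {\<omega> \<in> space M. \<bar>\<Sum>j=1..n. b j n * X j \<omega>\<bar> > xs n})
           \<longlonglongrightarrow> c0p + c0m"
proof -
  define Y where "Y i = (if i = 0 then (\<lambda>_. 0) else X i)" for i
  have Y: "Y i = X i" if "i \<ge> 1" for i using that by (simp add: Y_def)
  interpret iid_power_tails M Y \<alpha> c0p c0m
    unfolding Y_def[abs_def]
    by (rule iid_power_tails_zero_extension[OF P indep ident alpha tail_pos[unfolded F0_def]
          tail_neg[unfolded F0_def]])
  have "(\<lambda>n. xs n powr \<alpha> * prob {\<omega> \<in> space M. \<bar>\<Sum>j=1..n. b j n * Y j \<omega>\<bar> > xs n}) \<longlonglongrightarrow> c0p + c0m"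
    using alpha1 alpha_gt1 by (intro scaled_tail_prob_tendsto[of \<gamma>0] b_nonneg b_max b_sum xs_lim) (auto simp: Y)
  moreover have "(\<Sum>j=1..n. b j n * Y j \<omega>) = (\<Sum>j=1..n. b j n * X j \<omega>)" for n \<omega>
    by (intro sum.cong) (auto simp: Y)
  ultimately show ?thesis by simp
qed

end
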